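(* Let $\delta$ be a root of the quadratic polynomial $\mathsf{u}(\mathsf{z}+1)^2-(\mathsf{v}-1)(\mathsf{z}+1)-1$ in an algebraic closure of $\mathbb{K}=\mathbb{C}(\mathsf{u},\mathsf{v})$, and let $\mathbb{L}=\mathbb{K}(\delta)$. Put $\mathsf{q}:=\mathsf{u}(\delta+1)^2\in\mathbb{L}$. Then the assignment $R_i\mapsto T_i:=R_i+\delta E_iR_i$, $E_i\mapsto E_i$ ($1\le i\le n-1$) induces an isomorphism of $\mathbb{L}$-algebras between $\mathcal{E}_n(\mathsf{u},\mathsf{v})\otimes_{\mathbb{K}}\mathbb{L}$ and the one-parameter bt-algebra $\mathcal{E}_n(\mathsf{q})$ over $\mathbb{L}$; that is, the elements $T_i$ and $E_i$ satisfy all the defining relations of $\mathcal{E}_n(\mathsf{q})$, in particular $T_i^2=1+(\mathsf{q}-1)E_i+(\mathsf{q}-1)E_iT_i$, and they generate.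
   Context: Let $\mathsf{u},\mathsf{v}$ be commuting indeterminates and $\mathbb{K}=\mathbb{C}(\mathsf{u},\mathsf{v})$. The two-parameter bt-algebra $\mathcal{E}_n(\mathsf{u},\mathsf{v})$ is $\mathbb{K}$ for $n=1$, and for $n\ge 2$ the unital associative $\mathbb{K}$-algebra generated by $R_1,\dots,R_{n-1},E_1,\dots,E_{n-1}$ subject to: $E_iE_j=E_jE_i$ for all $i,j$; $E_i^2=E_i$; $E_iR_j=R_jE_i$ for $|i-j|>1$; $E_iR_i=R_iE_i$; $E_iR_jR_i=R_jR_iE_j$ for $|i-j|=1$; $E_iE_jR_i=E_jR_iE_j=R_iE_iE_j$ for $|i-j|=1$; $R_iR_j=R_jR_i$ for $|i-j|>1$; $R_iR_jR_i=R_jR_iR_j$ for $|i-j|=1$; and $R_i^2=1+(\mathsf{u}-1)E_i+(\mathsf{v}-1)E_iR_i$ for all $i$. For a field $F$ and $\mathsf{q}\in F$ (or an indeterminate), the one-parameter bt-algebra $\mathcal{E}_n(\mathsf{q})$ over $F$ is the unital $F$-algebra generated by $T_1,\dots,T_{n-1},E_1,\dots,E_{n-1}$ subject to the same relations with $R_i$ replaced by $T_i$, except that the quadratic relation is $T_i^2=1+(\mathsf{q}-1)E_i+(\mathsf{q}-1)E_iT_i$. *)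

theory Defs
  imports "HOL-Computational_Algebra.Polynomial" "HOL-Computational_Algebra.Fraction_Field"
begin

text \<open>K = Frac(C[x][y]); u is the inner variable x, v the outer variable y.\<close>
type_synonym K = "complex poly poly fract"

definition uu :: K where "uu = Fract [:[:0, 1:]:] 1"
definition vv :: K where "vv = Fract [:0, 1:] 1"

text \<open>Letters: G i stands for the generator R_i (resp. T_i), E i for E_i.\<close>
datatype gen = G nat | E nat

definition letters :: "nat \<Rightarrow> gen set" where
  "letters n = {G i | i. 1 \<le> i \<and> i < n} \<union> {E i | i. 1 \<le> i \<and> i < n}"

definition fa_carrier :: "nat \<Rightarrow> (gen list \<Rightarrow> 'l::field) set" where
  "fa_carrier n = {f. finite {w. f w \<noteq> 0} \<and> (\<forall>w. f w \<noteq> 0 \<longrightarrow> set w \<subseteq> letters n)}"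

definition fa_zero :: "gen list \<Rightarrow> 'l::field" where
  "fa_zero = (\<lambda>w. 0)"

definition mono :: "gen list \<Rightarrow> gen list \<Rightarrow> 'l::field" where
  "mono u = (\<lambda>w. if w = u then 1 else 0)"

definition fa_add :: "(gen list \<Rightarrow> 'l::field) \<Rightarrow> (gen list \<Rightarrow> 'l) \<Rightarrow> gen list \<Rightarrow> 'l" where
  "fa_add f g = (\<lambda>w. f w + g w)"

definition fa_diff :: "(gen list \<Rightarrow> 'l::field) \<Rightarrow> (gen list \<Rightarrow> 'l) \<Rightarrow> gen list \<Rightarrow> 'l" where
  "fa_diff f g = (\<lambda>w. f w - g w)"

definition fa_smul :: "'l::field \<Rightarrow> (gen list \<Rightarrow> 'l) \<Rightarrow> gen list \<Rightarrow> 'l" where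
  "fa_smul c f = (\<lambda>w. c * f w)"

definition fa_mult :: "(gen list \<Rightarrow> 'l::field) \<Rightarrow> (gen list \<Rightarrow> 'l) \<Rightarrow> gen list \<Rightarrow> 'l" where
  "fa_mult f g = (\<lambda>w. \<Sum>k\<in>{0..length w}. f (take k w) * g (drop k w))"

inductive_set fa_ideal :: "nat \<Rightarrow> (gen list \<Rightarrow> 'l::field) set \<Rightarrow> (gen list \<Rightarrow> 'l) set"
  for n :: nat and S :: "(gen list \<Rightarrow> 'l) set" where
  zero: "fa_zero \<in> fa_ideal n S"
| gen: "r \<in> S \<Longrightarrow> r \<in> fa_ideal n S"
| add: "a \<in> fa_ideal n S \<Longrightarrow> b \<in> fa_ideal n S \<Longrightarrow> fa_add a b \<in> fa_ideal n S"
| mult: "a \<in> fa_ideal n S \<Longrightarrow> x \<in> fa_carrier n \<Longrightarrow> y \<in> fa_carrier n \<Longrightarrow>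
           fa_mult x (fa_mult a y) \<in> fa_ideal n S"

definition word_img :: "(gen \<Rightarrow> gen list \<Rightarrow> 'l::field) \<Rightarrow> gen list \<Rightarrow> gen list \<Rightarrow> 'l" where
  "word_img \<phi> w = foldr (\<lambda>x acc. fa_mult (\<phi> x) acc) w (mono [])"

definition fa_subst :: "(gen \<Rightarrow> gen list \<Rightarrow> 'l::field) \<Rightarrow> (gen list \<Rightarrow> 'l) \<Rightarrow> gen list \<Rightarrow> 'l" where
  "fa_subst \<phi> f = (\<lambda>x. \<Sum>w\<in>{w. f w \<noteq> 0}. f w * word_img \<phi> w x)"

text \<open>Two-parameter algebra: a = u, b = v;  one-parameter algebra: a = b = q.\<close>
definition bt_rels :: "nat \<Rightarrow> 'l::field \<Rightarrow> 'l \<Rightarrow> (gen list \<Rightarrow> 'l) set" where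
  "bt_rels n a b =
     {fa_diff (mono [E i, E j]) (mono [E j, E i]) | i j. 1 \<le> i \<and> i < n \<and> 1 \<le> j \<and> j < n}
   \<union> {fa_diff (mono [E i, E i]) (mono [E i]) | i. 1 \<le> i \<and> i < n}
   \<union> {fa_diff (mono [E i, G j]) (mono [G j, E i]) | i j. 1 \<le> i \<and> i < n \<and> 1 \<le> j \<and> j < n
          \<and> (i + 1 < j \<or> j + 1 < i)}
   \<union> {fa_diff (mono [E i, G i]) (mono [G i, E i]) | i. 1 \<le> i \<and> i < n}
   \<union> {fa_diff (mono [E i, G j, G i]) (mono [G j, G i, E j]) | i j. 1 \<le> i \<and> i < n \<and> 1 \<le> j \<and> j < n
          \<and> (j = i + 1 \<or> i = j + 1)}
   \<union> {fa_diff (mono [E i, E j, G i]) (mono [E j, G i, E j]) | i j. 1 \<le> i \<and> i < n \<and> 1 \<le> j \<and> j < n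
          \<and> (j = i + 1 \<or> i = j + 1)}
   \<union> {fa_diff (mono [E j, G i, E j]) (mono [G i, E i, E j]) | i j. 1 \<le> i \<and> i < n \<and> 1 \<le> j \<and> j < n
          \<and> (j = i + 1 \<or> i = j + 1)}
   \<union> {fa_diff (mono [G i, G j]) (mono [G j, G i]) | i j. 1 \<le> i \<and> i < n \<and> 1 \<le> j \<and> j < n
          \<and> (i + 1 < j \<or> j + 1 < i)}
   \<union> {fa_diff (mono [G i, G j, G i]) (mono [G j, G i, G j]) | i j. 1 \<le> i \<and> i < n \<and> 1 \<le> j \<and> j < n
          \<and> (j = i + 1 \<or> i = j + 1)}
   \<union> {fa_diff (mono [G i, G i])
        (fa_add (mono []) (fa_add (fa_smul (a - 1) (mono [E i])) (fa_smul (b - 1) (mono [E i, G i]))))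
       | i. 1 \<le> i \<and> i < n}"

text \<open>The assignment \<phi> (letters of the source to elements of the target free algebra) induces an
  algebra isomorphism  F\<langle>letters n\<rangle>/I1  \<rightarrow>  F\<langle>letters n\<rangle>/I2 : the substitution map is a unital
  algebra homomorphism of free algebras, maps I1 into I2 (well defined), the induced map
  is injective and surjective.\<close>
definition induces_iso :: "nat \<Rightarrow> (gen list \<Rightarrow> 'l::field) set \<Rightarrow> (gen list \<Rightarrow> 'l) set
                             \<Rightarrow> (gen \<Rightarrow> gen list \<Rightarrow> 'l) \<Rightarrow> bool" where
  "induces_iso n I1 I2 \<phi> \<longleftrightarrow>
     (\<forall>f\<in>fa_carrier n. fa_subst \<phi> f \<in> fa_carrier n)
   \<and> fa_subst \<phi> (mono []) = mono []
   \<and> (\<forall>f\<in>fa_carrier n. \<forall>g\<in>fa_carrier n. fa_subst \<phi> (fa_add f g) = fa_add (fa_subst \<phi> f) (fa_subst \<phi> g))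
   \<and> (\<forall>c. \<forall>f\<in>fa_carrier n. fa_subst \<phi> (fa_smul c f) = fa_smul c (fa_subst \<phi> f))
   \<and> (\<forall>f\<in>fa_carrier n. \<forall>g\<in>fa_carrier n. fa_subst \<phi> (fa_mult f g) = fa_mult (fa_subst \<phi> f) (fa_subst \<phi> g))
   \<and> (\<forall>f\<in>fa_carrier n. f \<in> I1 \<longrightarrow> fa_subst \<phi> f \<in> I2)
   \<and> (\<forall>f\<in>fa_carrier n. fa_subst \<phi> f \<in> I2 \<longrightarrow> f \<in> I1)
   \<and> (\<forall>g\<in>fa_carrier n. \<exists>f\<in>fa_carrier n. fa_diff (fa_subst \<phi> f) g \<in> I2)"

definition bt_assign :: "'l::field \<Rightarrow> gen \<Rightarrow> gen list \<Rightarrow> 'l" where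
  "bt_assign \<delta> x = (case x of
      G i \<Rightarrow> fa_add (mono [G i]) (fa_smul \<delta> (mono [E i, G i]))
    | E i \<Rightarrow> mono [E i])"

end

theory Submission
  imports Defs "HOL-Library.Poly_Mapping"
begin

text \<open>Write \<open>T\<^sub>i = f\<^sub>i R\<^sub>i\<close> with \<open>f\<^sub>i = 1 + \<delta> E\<^sub>i\<close>. Since \<open>E\<^sub>i\<close> commutes with \<open>f\<^sub>j\<close> and \<open>R\<^sub>i\<close>, and \<open>R\<^sub>i R\<^sub>j R\<^sub>i\<close>
  carries \<open>E\<^sub>j\<close> to \<open>E\<^sub>i\<close>, the factors \<open>f\<close> can be moved through words in the \<open>R\<close>'s, and the
  \<open>T\<^sub>i, E\<^sub>i\<close> satisfy the bt-relations with quadratic coefficients \<open>(1 + \<delta>)\<^sup>2 u - 1\<close> and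
  \<open>(v - 1)(1 + \<delta>)\<close>, both equal to \<open>q - 1\<close> by the choice of \<open>\<delta>\<close>. The braid relation is the
  delicate one: it comes down to the symmetry of \<open>R\<^sub>i E\<^sub>j R\<^sub>j R\<^sub>i\<close> in \<open>i, j\<close>, which is obtained
  by cancelling an invertible \<open>R\<^sub>i\<close> (here \<open>u \<noteq> 0\<close> is used).
  The same twist with \<open>\<delta>' = -\<delta> / (1 + \<delta>)\<close> goes back, and since \<open>E\<^sub>i\<^sup>2 = E\<^sub>i\<close> the two twists
  compose to the identity on generators, so they induce mutually inverse isomorphisms.\<close>

section \<open>The bt-relations modulo an ideal\<close>

definition two_sided_ideal :: "'a::ring_1 set \<Rightarrow> bool" where
  "two_sided_ideal J \<longleftrightarrow> 0 \<in> J \<and> (\<forall>a\<in>J. \<forall>b\<in>J. a + b \<in> J) \<and> (\<forall>a\<in>J. \<forall>x y. x * a * y \<in> J)"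

lemma two_sided_ideal_zero: "two_sided_ideal J \<Longrightarrow> 0 \<in> J"
  and two_sided_ideal_add: "two_sided_ideal J \<Longrightarrow> a \<in> J \<Longrightarrow> b \<in> J \<Longrightarrow> a + b \<in> J"
  and two_sided_ideal_mult: "two_sided_ideal J \<Longrightarrow> a \<in> J \<Longrightarrow> x * a * y \<in> J"
  by (auto simp: two_sided_ideal_def)

lemma two_sided_ideal_mult_left: "two_sided_ideal J \<Longrightarrow> a \<in> J \<Longrightarrow> x * a \<in> J"
  using two_sided_ideal_mult[of J a x 1] by simp

lemma two_sided_ideal_mult_right: "two_sided_ideal J \<Longrightarrow> a \<in> J \<Longrightarrow> a * y \<in> J"
  using two_sided_ideal_mult[of J a 1 y] by simp

lemma two_sided_ideal_diff: "two_sided_ideal J \<Longrightarrow> a \<in> J \<Longrightarrow> b \<in> J \<Longrightarrow> a - b \<in> J"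
  using two_sided_ideal_add[of J a "- b"] two_sided_ideal_mult_left[of J b "- 1"] by simp

lemma two_sided_ideal_sum:
  "two_sided_ideal J \<Longrightarrow> (\<And>x. x \<in> S \<Longrightarrow> F x \<in> J) \<Longrightarrow> (\<Sum>x\<in>S. F x) \<in> J"
  by (induction S rule: infinite_finite_induct) (simp_all add: two_sided_ideal_zero two_sided_ideal_add)

definition cong_mod :: "'a::ring_1 set \<Rightarrow> 'a \<Rightarrow> 'a \<Rightarrow> bool" where
  "cong_mod J x y \<longleftrightarrow> x - y \<in> J"

definition adjacent :: "nat \<Rightarrow> nat \<Rightarrow> bool" where
  "adjacent i j \<longleftrightarrow> j = i + 1 \<or> i = j + 1"

definition distant :: "nat \<Rightarrow> nat \<Rightarrow> bool" where
  "distant i j \<longleftrightarrow> i + 1 < j \<or> j + 1 < i"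

lemma adjacent_sym: "adjacent i j \<Longrightarrow> adjacent j i"
  and distant_sym: "distant i j \<Longrightarrow> distant j i"
  by (auto simp: adjacent_def distant_def)

text \<open>The quadratic relation is \<open>g\<^sub>i\<^sup>2 = 1 + \<alpha> e\<^sub>i + \<beta> e\<^sub>i g\<^sub>i\<close>, so \<open>\<alpha>, \<beta>\<close> are \<open>u - 1, v - 1\<close>
  (resp. \<open>q - 1, q - 1\<close>) of the paper; field scalars act through \<open>sc\<close>.\<close>
definition bt_relations ::
    "'a::ring_1 set \<Rightarrow> ('b::field \<Rightarrow> 'a) \<Rightarrow> (nat \<Rightarrow> 'a) \<Rightarrow> (nat \<Rightarrow> 'a) \<Rightarrow> nat \<Rightarrow> 'b \<Rightarrow> 'b \<Rightarrow> bool" where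
  "bt_relations J sc e g n \<alpha> \<beta> \<longleftrightarrow>
    (\<forall>i\<in>{1..<n}. \<forall>j\<in>{1..<n}. cong_mod J (e i * e j) (e j * e i))
  \<and> (\<forall>i\<in>{1..<n}. cong_mod J (e i * e i) (e i))
  \<and> (\<forall>i\<in>{1..<n}. \<forall>j\<in>{1..<n}. distant i j \<longrightarrow> cong_mod J (e i * g j) (g j * e i))
  \<and> (\<forall>i\<in>{1..<n}. cong_mod J (e i * g i) (g i * e i))
  \<and> (\<forall>i\<in>{1..<n}. \<forall>j\<in>{1..<n}. adjacent i j \<longrightarrow> cong_mod J (e i * (g j * g i)) (g j * (g i * e j)))
  \<and> (\<forall>i\<in>{1..<n}. \<forall>j\<in>{1..<n}. adjacent i j \<longrightarrow> cong_mod J (e i * (e j * g i)) (e j * (g i * e j)))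
  \<and> (\<forall>i\<in>{1..<n}. \<forall>j\<in>{1..<n}. adjacent i j \<longrightarrow> cong_mod J (e j * (g i * e j)) (g i * (e i * e j)))
  \<and> (\<forall>i\<in>{1..<n}. \<forall>j\<in>{1..<n}. distant i j \<longrightarrow> cong_mod J (g i * g j) (g j * g i))
  \<and> (\<forall>i\<in>{1..<n}. \<forall>j\<in>{1..<n}. adjacent i j \<longrightarrow> cong_mod J (g i * (g j * g i)) (g j * (g i * g j)))
  \<and> (\<forall>i\<in>{1..<n}. cong_mod J (g i * g i) (1 + (sc \<alpha> * e i + sc \<beta> * (e i * g i))))"

locale bt_mod_ideal =
  fixes J :: "'a::ring_1 set" and sc :: "'b::field \<Rightarrow> 'a" and e g :: "nat \<Rightarrow> 'a"
    and n :: nat and \<alpha> \<beta> :: 'b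
  assumes ideal: "two_sided_ideal J"
    and sc_add: "sc (c + d) = sc c + sc d" and sc_mult: "sc (c * d) = sc c * sc d"
    and sc_one: "sc 1 = 1" and sc_central: "sc c * x = x * sc c"
    and relations: "bt_relations J sc e g n \<alpha> \<beta>"
begin

abbreviation congruent (infix "\<approx>" 50) where "x \<approx> y \<equiv> cong_mod J x y"

lemma cong_refl [simp]: "x \<approx> x"
  by (simp add: cong_mod_def two_sided_ideal_zero[OF ideal])

lemma cong_sym: "x \<approx> y \<Longrightarrow> y \<approx> x"
  using two_sided_ideal_diff[OF ideal two_sided_ideal_zero[OF ideal], of "x - y"]
  by (simp add: cong_mod_def)

lemma cong_trans [trans]: "x \<approx> y \<Longrightarrow> y \<approx> z \<Longrightarrow> x \<approx> z"
  using two_sided_ideal_add[OF ideal, of "x - y" "y - z"] by (simp add: cong_mod_def)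

lemma cong_add: "x \<approx> y \<Longrightarrow> u \<approx> v \<Longrightarrow> x + u \<approx> y + v"
  using two_sided_ideal_add[OF ideal, of "x - y" "u - v"] by (simp add: cong_mod_def algebra_simps)

lemma cong_diff: "x \<approx> y \<Longrightarrow> u \<approx> v \<Longrightarrow> x - u \<approx> y - v"
  using two_sided_ideal_diff[OF ideal, of "x - y" "u - v"] by (simp add: cong_mod_def algebra_simps)

lemma cong_mult_both: "x \<approx> y \<Longrightarrow> u * x * v \<approx> u * y * v"
  using two_sided_ideal_mult[OF ideal, of "x - y" u v] by (simp add: cong_mod_def algebra_simps)

lemma cong_mult_left: "x \<approx> y \<Longrightarrow> u * x \<approx> u * y"
  using cong_mult_both[of x y u 1] by simp

lemma cong_mult_right: "x \<approx> y \<Longrightarrow> x * v \<approx> y * v"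
  using cong_mult_both[of x y 1 v] by simp

lemma cong_mult: "x \<approx> y \<Longrightarrow> u \<approx> v \<Longrightarrow> x * u \<approx> y * v"
  by (rule cong_trans[OF cong_mult_right cong_mult_left])

lemma E_idem: "i \<in> {1..<n} \<Longrightarrow> e i * e i \<approx> e i"
  and E_G_comm: "i \<in> {1..<n} \<Longrightarrow> e i * g i \<approx> g i * e i"
  and G_quadratic: "i \<in> {1..<n} \<Longrightarrow> g i * g i \<approx> 1 + (sc \<alpha> * e i + sc \<beta> * (e i * g i))"
  using relations by (simp_all add: bt_relations_def)

context
  fixes i j assumes i: "i \<in> {1..<n}" and j: "j \<in> {1..<n}"
begin

lemma E_comm: "e i * e j \<approx> e j * e i"
  using relations i j by (simp add: bt_relations_def)

lemma E_G_comm_distant: "distant i j \<Longrightarrow> e i * g j \<approx> g j * e i"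
  and G_comm_distant: "distant i j \<Longrightarrow> g i * g j \<approx> g j * g i"
  and E_GG: "adjacent i j \<Longrightarrow> e i * (g j * g i) \<approx> g j * (g i * e j)"
  and E_EG: "adjacent i j \<Longrightarrow> e i * (e j * g i) \<approx> e j * (g i * e j)"
  and E_GE: "adjacent i j \<Longrightarrow> e j * (g i * e j) \<approx> g i * (e i * e j)"
  and G_braid: "adjacent i j \<Longrightarrow> g i * (g j * g i) \<approx> g j * (g i * g j)"
  using relations i j by (simp_all add: bt_relations_def)

end

lemma sc_zero: "sc 0 = 0"
  using sc_add[of 0 0] by simp

lemma sc_mult_left: "x * (sc c * y) = sc c * (x * y)"
  by (metis mult.assoc sc_central)

lemma sc_normalize:
  "e i * (sc c * y) = sc c * (e i * y)" "g i * (sc c * y) = sc c * (g i * y)"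
  "e i * sc c = sc c * e i" "g i * sc c = sc c * g i" "sc c * (sc d * y) = sc (c * d) * y"
  by (rule sc_mult_left sc_central[symmetric] | simp add: sc_mult mult.assoc)+

definition braid :: "nat \<Rightarrow> nat \<Rightarrow> 'a" where
  "braid i j = g i * (g j * g i)"

definition braid_E :: "nat \<Rightarrow> nat \<Rightarrow> 'a" where
  "braid_E i j = g i * (e j * (g j * g i))"

definition EE_braid :: "nat \<Rightarrow> nat \<Rightarrow> 'a" where
  "EE_braid i j = e i * (e j * braid i j)"

context
  fixes i j assumes i: "i \<in> {1..<n}" and j: "j \<in> {1..<n}" and ij: "adjacent i j"
begin

lemma G_EE: "g i * (e i * e j) \<approx> e i * (e j * g i)"
  by (rule cong_sym[OF cong_trans[OF E_EG[OF i j ij] E_GE[OF i j ij]]])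

lemma E_G_E: "e j * (g j * e i) \<approx> e j * (e i * g j)"
proof -
  have "e j * (g j * e i) = (e j * g j) * e i" by (simp add: mult.assoc)
  also have "\<dots> \<approx> (g j * e j) * e i" by (rule cong_mult_right[OF E_G_comm[OF j]])
  also have "\<dots> = g j * (e j * e i)" by (simp add: mult.assoc)
  also have "\<dots> \<approx> e j * (e i * g j)"
    by (rule cong_sym[OF cong_trans[OF E_EG[OF j i adjacent_sym[OF ij]] E_GE[OF j i adjacent_sym[OF ij]]]])
  finally show ?thesis .
qed

lemma E_braid_right: "e j * braid i j \<approx> braid i j * e i"
proof -
  have "e j * braid i j = (e j * (g i * g j)) * g i" by (simp add: braid_def mult.assoc)
  also have "\<dots> \<approx> (g i * (g j * e i)) * g i" by (rule cong_mult_right[OF E_GG[OF j i adjacent_sym[OF ij]]])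
  also have "\<dots> = (g i * g j) * (e i * g i)" by (simp add: mult.assoc)
  also have "\<dots> \<approx> (g i * g j) * (g i * e i)" by (rule cong_mult_left[OF E_G_comm[OF i]])
  also have "\<dots> = braid i j * e i" by (simp add: braid_def mult.assoc)
  finally show ?thesis .
qed

end

lemma braid_sym: "i \<in> {1..<n} \<Longrightarrow> j \<in> {1..<n} \<Longrightarrow> adjacent i j \<Longrightarrow> braid i j \<approx> braid j i"
  unfolding braid_def by (rule G_braid)

context
  fixes i j assumes i: "i \<in> {1..<n}" and j: "j \<in> {1..<n}" and ij: "adjacent i j"
begin

lemma E_braid_left: "e i * braid i j \<approx> braid i j * e j"
proof -
  have "e i * braid i j \<approx> e i * braid j i" by (rule cong_mult_left[OF braid_sym[OF i j ij]])
  also have "\<dots> \<approx> braid j i * e j" by (rule E_braid_right[OF j i adjacent_sym[OF ij]])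
  also have "\<dots> \<approx> braid i j * e j" by (rule cong_mult_right[OF braid_sym[OF j i adjacent_sym[OF ij]]])
  finally show ?thesis .
qed

lemma E_braid_E: "e i * braid_E i j \<approx> EE_braid i j"
proof -
  have "e i * braid_E i j = (e i * g i) * (e j * (g j * g i))" by (simp add: braid_E_def mult.assoc)
  also have "\<dots> \<approx> (g i * e i) * (e j * (g j * g i))" by (rule cong_mult_right[OF E_G_comm[OF i]])
  also have "\<dots> = (g i * (e i * e j)) * (g j * g i)" by (simp add: mult.assoc)
  also have "\<dots> \<approx> (e i * (e j * g i)) * (g j * g i)" by (rule cong_mult_right[OF G_EE[OF i j ij]])
  also have "\<dots> = EE_braid i j" by (simp add: EE_braid_def braid_def mult.assoc)
  finally show ?thesis .
qed

lemma G_EGE_G: "g i * (e j * (g j * e i)) * g i \<approx> EE_braid i j"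
proof -
  have "g i * (e j * (g j * e i)) * g i \<approx> g i * (e j * (e i * g j)) * g i"
    by (rule cong_mult_both[OF E_G_E[OF i j ij]])
  also have "\<dots> = g i * (e j * e i) * (g j * g i)" by (simp add: mult.assoc)
  also have "\<dots> \<approx> g i * (e i * e j) * (g j * g i)" by (rule cong_mult_right[OF cong_mult_left[OF E_comm[OF j i]]])
  also have "\<dots> \<approx> (e i * (e j * g i)) * (g j * g i)" by (rule cong_mult_right[OF G_EE[OF i j ij]])
  also have "\<dots> = EE_braid i j" by (simp add: EE_braid_def braid_def mult.assoc)
  finally show ?thesis .
qed

lemma braid_E_E: "braid_E i j * e i \<approx> EE_braid i j"
proof -
  have "braid_E i j * e i = (g i * e j * g j) * (g i * e i)" by (simp add: braid_E_def mult.assoc)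
  also have "\<dots> \<approx> (g i * e j * g j) * (e i * g i)" by (rule cong_mult_left[OF cong_sym[OF E_G_comm[OF i]]])
  also have "\<dots> = g i * (e j * (g j * e i)) * g i" by (simp add: mult.assoc)
  also have "\<dots> \<approx> EE_braid i j" by (rule G_EGE_G)
  finally show ?thesis .
qed

lemma E_braid_E_E: "e i * braid_E i j * e i \<approx> EE_braid i j"
proof -
  have "e i * braid_E i j * e i \<approx> EE_braid i j * e i" by (rule cong_mult_right[OF E_braid_E])
  also have "\<dots> = e i * e j * (braid i j * e i)" by (simp add: EE_braid_def mult.assoc)
  also have "\<dots> \<approx> e i * e j * (e j * braid i j)"
    by (rule cong_mult_left[OF cong_sym[OF E_braid_right[OF i j ij]]])
  also have "\<dots> = e i * (e j * e j) * braid i j" by (simp add: mult.assoc)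
  also have "\<dots> \<approx> e i * e j * braid i j" by (rule cong_mult_right[OF cong_mult_left[OF E_idem[OF j]]])
  also have "\<dots> = EE_braid i j" by (simp add: EE_braid_def mult.assoc)
  finally show ?thesis .
qed

lemma EE_braid_sym: "EE_braid i j \<approx> EE_braid j i"
  unfolding EE_braid_def mult.assoc[symmetric]
  by (rule cong_mult[OF E_comm[OF i j] braid_sym[OF i j ij]])

end

text \<open>\<open>g\<^sub>i (g\<^sub>i - \<beta> e\<^sub>i) = 1 + \<alpha> e\<^sub>i\<close>, and as \<open>e\<^sub>i\<close> is idempotent, \<open>1 + \<alpha> e\<^sub>i\<close> has the inverse
  \<open>1 + ((1 + \<alpha>)\<^sup>-\<^sup>1 - 1) e\<^sub>i\<close>.\<close>
lemma G_right_invertible: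
  assumes \<alpha>: "1 + \<alpha> \<noteq> 0" and i: "i \<in> {1..<n}"
  shows "\<exists>h. g i * h \<approx> 1"
proof
  define \<gamma> where "\<gamma> = 1 / (1 + \<alpha>) - 1"
  have \<gamma>: "\<alpha> + \<gamma> + \<alpha> * \<gamma> = 0" using \<alpha> by (simp add: \<gamma>_def field_simps)
  have "g i * (g i - sc \<beta> * e i) = g i * g i - sc \<beta> * (g i * e i)" by (simp add: algebra_simps sc_normalize)
  also have "\<dots> \<approx> (1 + (sc \<alpha> * e i + sc \<beta> * (e i * g i))) - sc \<beta> * (e i * g i)"
    by (rule cong_diff[OF G_quadratic[OF i] cong_mult_left[OF cong_sym[OF E_G_comm[OF i]]]])
  also have "\<dots> = 1 + sc \<alpha> * e i" by simp
  finally have inv_mod_E: "g i * (g i - sc \<beta> * e i) \<approx> 1 + sc \<alpha> * e i" .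
  have "g i * ((g i - sc \<beta> * e i) * (1 + sc \<gamma> * e i)) = (g i * (g i - sc \<beta> * e i)) * (1 + sc \<gamma> * e i)"
    by (simp add: mult.assoc)
  also have "\<dots> \<approx> (1 + sc \<alpha> * e i) * (1 + sc \<gamma> * e i)" by (rule cong_mult_right[OF inv_mod_E])
  also have "\<dots> = 1 + sc \<alpha> * e i + sc \<gamma> * e i + sc \<alpha> * (sc \<gamma> * (e i * e i))"
    by (simp add: algebra_simps sc_normalize)
  also have "\<dots> \<approx> 1 + sc \<alpha> * e i + sc \<gamma> * e i + sc \<alpha> * (sc \<gamma> * e i)"
    by (rule cong_add[OF cong_refl cong_mult_left[OF cong_mult_left[OF E_idem[OF i]]]])
  also have "\<dots> = 1 + sc (\<alpha> + \<gamma> + \<alpha> * \<gamma>) * e i" by (simp add: sc_add sc_mult algebra_simps)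
  also have "\<dots> = 1" by (simp add: \<gamma> sc_zero)
  finally show "g i * ((g i - sc \<beta> * e i) * (1 + sc \<gamma> * e i)) \<approx> 1" .
qed

context
  fixes i j assumes i: "i \<in> {1..<n}" and j: "j \<in> {1..<n}" and ij: "adjacent i j"
begin

lemma G_E_G_E: "g i * (e j * (g j * e i)) \<approx> e j * (g i * (e j * g j))"
proof -
  have "g i * (e j * (g j * e i)) \<approx> g i * (e j * (e i * g j))" by (rule cong_mult_left[OF E_G_E[OF i j ij]])
  also have "\<dots> = g i * (e j * e i) * g j" by (simp add: mult.assoc)
  also have "\<dots> \<approx> g i * (e i * e j) * g j" by (rule cong_mult_right[OF cong_mult_left[OF E_comm[OF j i]]])
  also have "\<dots> \<approx> e j * (g i * e j) * g j" by (rule cong_mult_right[OF cong_sym[OF E_GE[OF i j ij]]])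
  also have "\<dots> = e j * (g i * (e j * g j))" by (simp add: mult.assoc)
  finally show ?thesis .
qed

lemma E_G_G_E_G: "e j * (g j * (g i * (e j * g j))) \<approx> EE_braid i j"
proof -
  have "e j * (g j * (g i * (e j * g j))) = e j * (g j * (g i * e j)) * g j" by (simp add: mult.assoc)
  also have "\<dots> \<approx> e j * (e i * (g j * g i)) * g j"
    by (rule cong_mult_both[OF cong_sym[OF E_GG[OF i j ij]]])
  also have "\<dots> = (e j * e i) * braid j i" by (simp add: braid_def mult.assoc)
  also have "\<dots> \<approx> (e i * e j) * braid j i" by (rule cong_mult_right[OF E_comm[OF j i]])
  also have "\<dots> \<approx> (e i * e j) * braid i j" by (rule cong_mult_left[OF braid_sym[OF j i adjacent_sym[OF ij]]])
  also have "\<dots> = EE_braid i j" by (simp add: EE_braid_def mult.assoc)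
  finally show ?thesis .
qed

text \<open>Both sides reduce, via the quadratic relation, to the same normal form.\<close>
lemma braid_E_mult_G: "braid_E i j * g i \<approx> braid_E j i * g i"
proof -
  let ?common = "g i * (e j * g j)"
  have "braid_E i j * g i = ?common * (g i * g i)" by (simp add: braid_E_def mult.assoc)
  also have "\<dots> \<approx> ?common * (1 + (sc \<alpha> * e i + sc \<beta> * (e i * g i)))"
    by (rule cong_mult_left[OF G_quadratic[OF i]])
  also have "\<dots> = ?common + sc \<alpha> * (g i * (e j * (g j * e i))) + sc \<beta> * (g i * (e j * (g j * e i)) * g i)"
    by (simp add: algebra_simps sc_normalize)
  also have "\<dots> \<approx> ?common + sc \<alpha> * (e j * (g i * (e j * g j))) + sc \<beta> * (e j * (g j * (g i * (e j * g j))))"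
    by (intro cong_add cong_refl cong_mult_left G_E_G_E
        cong_trans[OF G_EGE_G[OF i j ij] cong_sym[OF E_G_G_E_G]])
  also have "\<dots> = (1 + (sc \<alpha> * e j + sc \<beta> * (e j * g j))) * ?common"
    by (simp add: algebra_simps sc_normalize)
  also have "\<dots> \<approx> (g j * g j) * ?common" by (rule cong_mult_right[OF cong_sym[OF G_quadratic[OF j]]])
  also have "\<dots> = g j * (g j * (g i * e j)) * g j" by (simp add: mult.assoc)
  also have "\<dots> \<approx> g j * (e i * (g j * g i)) * g j" by (rule cong_mult_both[OF cong_sym[OF E_GG[OF i j ij]]])
  also have "\<dots> = g j * e i * braid j i" by (simp add: braid_def mult.assoc)
  also have "\<dots> \<approx> g j * e i * braid i j" by (rule cong_mult_left[OF braid_sym[OF j i adjacent_sym[OF ij]]])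
  also have "\<dots> = braid_E j i * g i" by (simp add: braid_E_def braid_def mult.assoc)
  finally show ?thesis .
qed

lemma braid_E_sym:
  assumes "1 + \<alpha> \<noteq> 0"
  shows "braid_E i j \<approx> braid_E j i"
proof -
  obtain h where h: "g i * h \<approx> 1" using G_right_invertible[OF assms i] by blast
  have "braid_E i j = braid_E i j * 1" by simp
  also have "\<dots> \<approx> braid_E i j * (g i * h)" by (rule cong_mult_left[OF cong_sym[OF h]])
  also have "\<dots> = (braid_E i j * g i) * h" by (simp add: mult.assoc)
  also have "\<dots> \<approx> (braid_E j i * g i) * h" by (rule cong_mult_right[OF braid_E_mult_G])
  also have "\<dots> = braid_E j i * (g i * h)" by (simp add: mult.assoc)
  also have "\<dots> \<approx> braid_E j i * 1" by (rule cong_mult_left[OF h])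
  finally show ?thesis by simp
qed

end

end

section \<open>Twisting the generators\<close>

locale bt_twist = bt_mod_ideal J sc e g n \<alpha> \<beta>
  for J :: "'a::ring_1 set" and sc :: "'b::field \<Rightarrow> 'a" and e g n \<alpha> \<beta> +
  fixes c :: 'b
begin

definition twist :: "nat \<Rightarrow> 'a" where
  "twist i = 1 + sc c * e i"

definition T :: "nat \<Rightarrow> 'a" where
  "T i = twist i * g i"

lemma sc_normalize_twist: "twist i * (sc d * y) = sc d * (twist i * y)" "twist i * sc d = sc d * twist i"
  by (rule sc_mult_left sc_central[symmetric])+

lemma E_twist_comm:
  assumes "i \<in> {1..<n}" "j \<in> {1..<n}"
  shows "e i * twist j \<approx> twist j * e i"
proof -
  have "e i * twist j = e i + sc c * (e i * e j)" by (simp add: twist_def algebra_simps sc_normalize)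
  also have "\<dots> \<approx> e i + sc c * (e j * e i)" by (rule cong_add[OF cong_refl cong_mult_left[OF E_comm[OF assms]]])
  also have "\<dots> = twist j * e i" by (simp add: twist_def algebra_simps sc_normalize)
  finally show ?thesis .
qed

lemma twist_comm:
  assumes "i \<in> {1..<n}" "j \<in> {1..<n}"
  shows "twist i * twist j \<approx> twist j * twist i"
proof -
  have "twist i * twist j = 1 + sc c * e i + sc c * e j + sc c * (sc c * (e i * e j))"
    by (simp add: twist_def algebra_simps sc_normalize)
  also have "\<dots> \<approx> 1 + sc c * e i + sc c * e j + sc c * (sc c * (e j * e i))"
    by (rule cong_add[OF cong_refl cong_mult_left[OF cong_mult_left[OF E_comm[OF assms]]]])
  also have "\<dots> = twist j * twist i" by (simp add: twist_def algebra_simps sc_normalize)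
  finally show ?thesis .
qed

lemma twist_G_comm:
  assumes "i \<in> {1..<n}"
  shows "twist i * g i \<approx> g i * twist i"
proof -
  have "twist i * g i = g i + sc c * (e i * g i)" by (simp add: twist_def algebra_simps sc_normalize)
  also have "\<dots> \<approx> g i + sc c * (g i * e i)" by (rule cong_add[OF cong_refl cong_mult_left[OF E_G_comm[OF assms]]])
  also have "\<dots> = g i * twist i" by (simp add: twist_def algebra_simps sc_normalize)
  finally show ?thesis .
qed

lemma G_twist_comm_distant:
  assumes "i \<in> {1..<n}" "j \<in> {1..<n}" "distant i j"
  shows "g i * twist j \<approx> twist j * g i"
proof -
  have "g i * twist j = g i + sc c * (g i * e j)" by (simp add: twist_def algebra_simps sc_normalize)
  also have "\<dots> \<approx> g i + sc c * (e j * g i)"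
    by (rule cong_add[OF cong_refl cong_mult_left[OF cong_sym[OF E_G_comm_distant[OF assms(2,1) distant_sym[OF assms(3)]]]]])
  also have "\<dots> = twist j * g i" by (simp add: twist_def algebra_simps sc_normalize)
  finally show ?thesis .
qed

lemma E_T_comm_distant:
  assumes "i \<in> {1..<n}" "j \<in> {1..<n}" "distant i j"
  shows "e i * T j \<approx> T j * e i"
proof -
  have "e i * T j = (e i * twist j) * g j" by (simp add: T_def mult.assoc)
  also have "\<dots> \<approx> (twist j * e i) * g j" by (rule cong_mult_right[OF E_twist_comm[OF assms(1,2)]])
  also have "\<dots> = twist j * (e i * g j)" by (simp add: mult.assoc)
  also have "\<dots> \<approx> twist j * (g j * e i)" by (rule cong_mult_left[OF E_G_comm_distant[OF assms]])
  also have "\<dots> = T j * e i" by (simp add: T_def mult.assoc)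
  finally show ?thesis .
qed

lemma E_T_comm:
  assumes "i \<in> {1..<n}"
  shows "e i * T i \<approx> T i * e i"
proof -
  have "e i * T i = (e i * twist i) * g i" by (simp add: T_def mult.assoc)
  also have "\<dots> \<approx> (twist i * e i) * g i" by (rule cong_mult_right[OF E_twist_comm[OF assms assms]])
  also have "\<dots> = twist i * (e i * g i)" by (simp add: mult.assoc)
  also have "\<dots> \<approx> twist i * (g i * e i)" by (rule cong_mult_left[OF E_G_comm[OF assms]])
  also have "\<dots> = T i * e i" by (simp add: T_def mult.assoc)
  finally show ?thesis .
qed

lemma T_comm_distant:
  assumes "i \<in> {1..<n}" "j \<in> {1..<n}" "distant i j"
  shows "T i * T j \<approx> T j * T i"
proof -
  have "T i * T j = twist i * (g i * twist j) * g j" by (simp add: T_def mult.assoc)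
  also have "\<dots> \<approx> twist i * (twist j * g i) * g j" by (rule cong_mult_both[OF G_twist_comm_distant[OF assms]])
  also have "\<dots> = (twist i * twist j) * (g i * g j)" by (simp add: mult.assoc)
  also have "\<dots> \<approx> (twist j * twist i) * (g i * g j)" by (rule cong_mult_right[OF twist_comm[OF assms(1,2)]])
  also have "\<dots> \<approx> (twist j * twist i) * (g j * g i)" by (rule cong_mult_left[OF G_comm_distant[OF assms]])
  also have "\<dots> = twist j * (twist i * g j) * g i" by (simp add: mult.assoc)
  also have "\<dots> \<approx> twist j * (g j * twist i) * g i"
    by (rule cong_mult_both[OF cong_sym[OF G_twist_comm_distant[OF assms(2,1) distant_sym[OF assms(3)]]]])
  also have "\<dots> = T j * T i" by (simp add: T_def mult.assoc)
  finally show ?thesis .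
qed

lemma T_quadratic:
  assumes i: "i \<in> {1..<n}"
  shows "T i * T i \<approx> 1 + (sc ((1 + c) * (1 + c) * (1 + \<alpha>) - 1) * e i + sc (\<beta> * (1 + c)) * (e i * T i))"
proof -
  define s where "s = c + c + c * c"
  have twist_sq: "twist i * twist i \<approx> 1 + sc s * e i"
  proof -
    have "twist i * twist i = 1 + sc c * e i + sc c * e i + sc c * (sc c * (e i * e i))"
      by (simp add: twist_def algebra_simps sc_normalize)
    also have "\<dots> \<approx> 1 + sc c * e i + sc c * e i + sc c * (sc c * e i)"
      by (rule cong_add[OF cong_refl cong_mult_left[OF cong_mult_left[OF E_idem[OF i]]]])
    also have "\<dots> = 1 + sc s * e i" by (simp only: s_def sc_add sc_mult distrib_right mult.assoc add.assoc)
    finally show ?thesis .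
  qed
  have E_T: "e i * T i \<approx> sc (1 + c) * (e i * g i)"
  proof -
    have "e i * T i = e i * g i + sc c * ((e i * e i) * g i)" by (simp add: T_def twist_def algebra_simps sc_normalize)
    also have "\<dots> \<approx> e i * g i + sc c * (e i * g i)"
      by (rule cong_add[OF cong_refl cong_mult_left[OF cong_mult_right[OF E_idem[OF i]]]])
    also have "\<dots> = sc (1 + c) * (e i * g i)" by (simp add: sc_add sc_one algebra_simps)
    finally show ?thesis .
  qed
  have "T i * T i = twist i * (g i * twist i) * g i" by (simp add: T_def mult.assoc)
  also have "\<dots> \<approx> twist i * (twist i * g i) * g i" by (rule cong_mult_both[OF cong_sym[OF twist_G_comm[OF i]]])
  also have "\<dots> = (twist i * twist i) * (g i * g i)" by (simp add: mult.assoc)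
  also have "\<dots> \<approx> (1 + sc s * e i) * (1 + (sc \<alpha> * e i + sc \<beta> * (e i * g i)))"
    by (rule cong_mult[OF twist_sq G_quadratic[OF i]])
  also have "\<dots> = 1 + sc \<alpha> * e i + sc \<beta> * (e i * g i) + sc s * e i + sc s * (sc \<alpha> * (e i * e i))
       + sc s * (sc \<beta> * ((e i * e i) * g i))" by (simp add: algebra_simps sc_normalize)
  also have "\<dots> \<approx> 1 + sc \<alpha> * e i + sc \<beta> * (e i * g i) + sc s * e i + sc s * (sc \<alpha> * e i)
       + sc s * (sc \<beta> * (e i * g i))"
    by (rule cong_add[OF cong_add[OF cong_refl cong_mult_left[OF cong_mult_left[OF E_idem[OF i]]]]
          cong_mult_left[OF cong_mult_left[OF cong_mult_right[OF E_idem[OF i]]]]])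
  also have "\<dots> = 1 + (sc (\<alpha> + s + s * \<alpha>) * e i + sc (\<beta> * (1 + c)) * (sc (1 + c) * (e i * g i)))"
  proof -
    have "\<beta> * (1 + c) * (1 + c) = \<beta> + s * \<beta>" by (simp add: s_def algebra_simps)
    then have "sc (\<beta> * (1 + c)) * (sc (1 + c) * (e i * g i)) = sc (\<beta> + s * \<beta>) * (e i * g i)"
      by (simp only: sc_normalize(5))
    also have "\<dots> = sc \<beta> * (e i * g i) + sc s * (sc \<beta> * (e i * g i))"
      by (simp only: sc_add sc_mult distrib_right mult.assoc)
    finally have "sc (\<beta> * (1 + c)) * (sc (1 + c) * (e i * g i)) = sc \<beta> * (e i * g i) + sc s * (sc \<beta> * (e i * g i))" .
    moreover have "sc (\<alpha> + s + s * \<alpha>) * e i = sc \<alpha> * e i + sc s * e i + sc s * (sc \<alpha> * e i)"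
      by (simp only: sc_add sc_mult distrib_right mult.assoc)
    ultimately show ?thesis by (simp only:) (simp add: add.assoc add.commute add.left_commute)
  qed
  also have "\<dots> \<approx> 1 + (sc (\<alpha> + s + s * \<alpha>) * e i + sc (\<beta> * (1 + c)) * (e i * T i))"
    by (rule cong_add[OF cong_refl cong_add[OF cong_refl cong_mult_left[OF cong_sym[OF E_T]]]])
  finally have "T i * T i \<approx> 1 + (sc (\<alpha> + s + s * \<alpha>) * e i + sc (\<beta> * (1 + c)) * (e i * T i))" .
  moreover have "(1 + c) * (1 + c) * (1 + \<alpha>) - 1 = \<alpha> + s + s * \<alpha>" by (simp add: s_def algebra_simps)
  ultimately show ?thesis by (simp only:)
qed

context
  fixes i j assumes i: "i \<in> {1..<n}" and j: "j \<in> {1..<n}" and ij: "adjacent i j"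
begin

lemma E_TT: "e i * (T j * T i) \<approx> T j * (T i * e j)"
proof -
  have "e i * (T j * T i) = (e i * twist j) * (g j * (twist i * g i))" by (simp add: T_def mult.assoc)
  also have "\<dots> \<approx> (twist j * e i) * (g j * (twist i * g i))" by (rule cong_mult_right[OF E_twist_comm[OF i j]])
  also have "\<dots> \<approx> (twist j * e i) * (g j * (g i * twist i))"
    by (rule cong_mult_left[OF cong_mult_left[OF twist_G_comm[OF i]]])
  also have "\<dots> = twist j * (e i * (g j * g i)) * twist i" by (simp add: mult.assoc)
  also have "\<dots> \<approx> twist j * (g j * (g i * e j)) * twist i" by (rule cong_mult_both[OF E_GG[OF i j ij]])
  also have "\<dots> = (twist j * g j * g i) * (e j * twist i)" by (simp add: mult.assoc)
  also have "\<dots> \<approx> (twist j * g j * g i) * (twist i * e j)" by (rule cong_mult_left[OF E_twist_comm[OF j i]])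
  also have "\<dots> = (twist j * g j) * (g i * twist i) * e j" by (simp add: mult.assoc)
  also have "\<dots> \<approx> (twist j * g j) * (twist i * g i) * e j"
    by (rule cong_mult_right[OF cong_mult_left[OF cong_sym[OF twist_G_comm[OF i]]]])
  also have "\<dots> = T j * (T i * e j)" by (simp add: T_def mult.assoc)
  finally show ?thesis .
qed

lemma E_ET: "e i * (e j * T i) \<approx> e j * (T i * e j)"
proof -
  have "e i * (e j * T i) = e i * (e j * twist i) * g i" by (simp add: T_def mult.assoc)
  also have "\<dots> \<approx> e i * (twist i * e j) * g i" by (rule cong_mult_both[OF E_twist_comm[OF j i]])
  also have "\<dots> = (e i * twist i) * (e j * g i)" by (simp add: mult.assoc)
  also have "\<dots> \<approx> (twist i * e i) * (e j * g i)" by (rule cong_mult_right[OF E_twist_comm[OF i i]])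
  also have "\<dots> = twist i * (e i * (e j * g i))" by (simp add: mult.assoc)
  also have "\<dots> \<approx> twist i * (e j * (g i * e j))" by (rule cong_mult_left[OF E_EG[OF i j ij]])
  also have "\<dots> = (twist i * e j) * (g i * e j)" by (simp add: mult.assoc)
  also have "\<dots> \<approx> (e j * twist i) * (g i * e j)" by (rule cong_mult_right[OF cong_sym[OF E_twist_comm[OF j i]]])
  also have "\<dots> = e j * (T i * e j)" by (simp add: T_def mult.assoc)
  finally show ?thesis .
qed

lemma E_TE: "e j * (T i * e j) \<approx> T i * (e i * e j)"
proof -
  have "e j * (T i * e j) = (e j * twist i) * (g i * e j)" by (simp add: T_def mult.assoc)
  also have "\<dots> \<approx> (twist i * e j) * (g i * e j)" by (rule cong_mult_right[OF E_twist_comm[OF j i]])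
  also have "\<dots> = twist i * (e j * (g i * e j))" by (simp add: mult.assoc)
  also have "\<dots> \<approx> twist i * (g i * (e i * e j))" by (rule cong_mult_left[OF E_GE[OF i j ij]])
  also have "\<dots> = T i * (e i * e j)" by (simp add: T_def mult.assoc)
  finally show ?thesis .
qed

lemma twist_braid: "twist i * braid i j \<approx> braid i j * twist j"
proof -
  have "twist i * braid i j = braid i j + sc c * (e i * braid i j)"
    by (simp add: twist_def algebra_simps sc_mult_left)
  also have "\<dots> \<approx> braid i j + sc c * (braid i j * e j)"
    by (rule cong_add[OF cong_refl cong_mult_left[OF E_braid_left[OF i j ij]]])
  also have "\<dots> = braid i j * twist j" by (simp add: twist_def distrib_left sc_mult_left)
  finally show ?thesis .
qed

lemma twist_braid_E_twist:
  "twist i * braid_E i j * twist i \<approx> braid_E i j + sc c * EE_braid i j + sc c * EE_braid i j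
     + sc c * (sc c * EE_braid i j)"
proof -
  have "twist i * braid_E i j * twist i = braid_E i j + sc c * (e i * braid_E i j)
      + sc c * (braid_E i j * e i) + sc c * (sc c * (e i * braid_E i j * e i))"
    by (simp add: twist_def algebra_simps sc_normalize sc_mult_left[of "braid_E i j"]
        sc_central[of _ "braid_E i j", symmetric])
  also have "\<dots> \<approx> braid_E i j + sc c * EE_braid i j + sc c * EE_braid i j + sc c * (sc c * EE_braid i j)"
    by (intro cong_add cong_refl cong_mult_left E_braid_E[OF i j ij] braid_E_E[OF i j ij]
        E_braid_E_E[OF i j ij])
  finally show ?thesis .
qed

text \<open>Moving the twists outward: \<open>T\<^sub>i T\<^sub>j T\<^sub>i = f\<^sub>i (g\<^sub>i g\<^sub>j g\<^sub>i + c g\<^sub>i e\<^sub>j g\<^sub>j g\<^sub>i) f\<^sub>i\<close>,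
  with \<open>f\<^sub>i = twist i\<close>.\<close>
lemma T_braid:
  "T i * (T j * T i) \<approx> braid i j * (twist j * twist i)
     + sc c * (braid_E i j + sc c * EE_braid i j + sc c * EE_braid i j + sc c * (sc c * EE_braid i j))"
proof -
  have "T i * (T j * T i) = (twist i * g i * twist j * g j) * (twist i * g i)" by (simp add: T_def mult.assoc)
  also have "\<dots> \<approx> (twist i * g i * twist j * g j) * (g i * twist i)" by (rule cong_mult_left[OF twist_G_comm[OF i]])
  also have "\<dots> = twist i * (g i * twist j * g j * g i) * twist i" by (simp add: mult.assoc)
  also have "g i * twist j * g j * g i = braid i j + sc c * braid_E i j"
    by (simp add: twist_def braid_def braid_E_def algebra_simps sc_normalize)
  also have "twist i * (braid i j + sc c * braid_E i j) * twist i
      = (twist i * braid i j) * twist i + sc c * (twist i * braid_E i j * twist i)"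
    by (simp add: algebra_simps sc_normalize sc_normalize_twist)
  also have "\<dots> \<approx> (braid i j * twist j) * twist i
      + sc c * (braid_E i j + sc c * EE_braid i j + sc c * EE_braid i j + sc c * (sc c * EE_braid i j))"
    by (rule cong_add[OF cong_mult_right[OF twist_braid] cong_mult_left[OF twist_braid_E_twist]])
  finally show ?thesis by (simp add: mult.assoc)
qed

end

lemma T_braid_relation:
  assumes \<alpha>: "1 + \<alpha> \<noteq> 0" and i: "i \<in> {1..<n}" and j: "j \<in> {1..<n}" and ij: "adjacent i j"
  shows "T i * (T j * T i) \<approx> T j * (T i * T j)"
proof -
  have "T i * (T j * T i) \<approx> braid i j * (twist j * twist i)
     + sc c * (braid_E i j + sc c * EE_braid i j + sc c * EE_braid i j + sc c * (sc c * EE_braid i j))"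
    by (rule T_braid[OF i j ij])
  also have "\<dots> \<approx> braid j i * (twist i * twist j)
     + sc c * (braid_E j i + sc c * EE_braid j i + sc c * EE_braid j i + sc c * (sc c * EE_braid j i))"
    by (intro cong_add cong_mult cong_mult_left braid_sym[OF i j ij] twist_comm[OF j i]
        braid_E_sym[OF i j ij \<alpha>] EE_braid_sym[OF i j ij])
  also have "\<dots> \<approx> T j * (T i * T j)" by (rule cong_sym[OF T_braid[OF j i adjacent_sym[OF ij]]])
  finally show ?thesis .
qed

theorem bt_relations_T:
  assumes "1 + \<alpha> \<noteq> 0"
  shows "bt_relations J sc e T n ((1 + c) * (1 + c) * (1 + \<alpha>) - 1) (\<beta> * (1 + c))"
  unfolding bt_relations_def
  by (intro conjI ballI impI; rule E_comm E_idem E_T_comm_distant E_T_comm E_TT E_ET E_TE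
      T_comm_distant T_braid_relation[OF assms] T_quadratic; assumption)

end

lemma bt_relations_twist:
  fixes J :: "'a::ring_1 set" and sc :: "'b::field \<Rightarrow> 'a"
  assumes "two_sided_ideal J" and "\<And>c d. sc (c + d) = sc c + sc d" and "\<And>c d. sc (c * d) = sc c * sc d"
    and "sc 1 = 1" and "\<And>c x. sc c * x = x * sc c" and "bt_relations J sc e g n \<alpha> \<beta>" and "1 + \<alpha> \<noteq> 0"
  shows "bt_relations J sc e (\<lambda>i. (1 + sc c * e i) * g i) n ((1 + c) * (1 + c) * (1 + \<alpha>) - 1) (\<beta> * (1 + c))"
proof -
  interpret bt_twist J sc e g n \<alpha> \<beta> c by (unfold_locales; fact assms)
  have "T = (\<lambda>i. (1 + sc c * e i) * g i)" by (rule ext) (simp add: T_def twist_def)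
  with bt_relations_T[OF assms(7)] show ?thesis by simp
qed

section \<open>The free algebra on words\<close>

text \<open>With concatenation as addition of words, the convolution product of \<open>Poly_Mapping\<close>
  turns \<open>gen list \<Rightarrow>\<^sub>0 'l\<close> into the free associative algebra on the letters.\<close>
instantiation list :: (type) monoid_add
begin
definition zero_list_def: "0 = []"
definition plus_list_def: "xs + ys = xs @ ys"
instance by standard (auto simp: zero_list_def plus_list_def)
end

type_synonym 'l fa = "gen list \<Rightarrow>\<^sub>0 'l"

abbreviation fa_coeffs :: "'l fa \<Rightarrow> gen list \<Rightarrow> 'l::zero" where
  "fa_coeffs \<equiv> Poly_Mapping.lookup"

lemma Sum_any_when_append:
  "(\<Sum>b. f b when w = l @ b) = (f (drop (length l) w) when take (length l) w = l)"
proof -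
  have "(\<lambda>b. f b when w = l @ b) =
        (\<lambda>b. if b = drop (length l) w then (f b when take (length l) w = l) else 0)"
    by (auto simp: fun_eq_iff when_def append_eq_conv_conj) (metis append_take_drop_id)
  then show ?thesis by (simp only: Sum_any.delta)
qed

lemma fa_coeffs_times_apply:
  fixes p q :: "'l::field fa"
  shows "fa_coeffs (p * q) w = fa_mult (fa_coeffs p) (fa_coeffs q) w"
proof -
  let ?S = "(\<lambda>k. take k w) ` {0..length w}"
  let ?F = "\<lambda>l. fa_coeffs p l * (fa_coeffs q (drop (length l) w) when take (length l) w = l)"
  have "fa_coeffs (p * q) w = Sum_any ?F"
    by (simp only: lookup_mult plus_list_def Sum_any_when_append)
  also have "\<dots> = (\<Sum>l\<in>?S. ?F l)"
  proof (rule Sum_any.expand_superset)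
    show "{l. ?F l \<noteq> 0} \<subseteq> ?S"
    proof
      fix l assume "l \<in> {l. ?F l \<noteq> 0}"
      then have "take (length l) w = l" by (auto simp: when_def split: if_splits)
      then have "length l \<le> length w" by (metis length_take min.bounded_iff order_refl)
      with \<open>take (length l) w = l\<close> show "l \<in> ?S" by force
    qed
  qed simp
  also have "\<dots> = (\<Sum>k\<in>{0..length w}. ?F (take k w))"
    by (rule sum.reindex_cong[OF _ refl refl]) (rule inj_onI, metis atLeastAtMost_iff length_take min.absorb2)
  also have "\<dots> = fa_mult (fa_coeffs p) (fa_coeffs q) w"
    unfolding fa_mult_def by (rule sum.cong) (auto simp: when_def min_def)
  finally show ?thesis .
qed

lemma fa_coeffs_times: "fa_coeffs (p * q) = fa_mult (fa_coeffs p) (fa_coeffs (q :: 'l::field fa))"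
  by (rule ext) (rule fa_coeffs_times_apply)

definition fa_const :: "'l::field \<Rightarrow> 'l fa" where
  "fa_const c = Poly_Mapping.single [] c"

definition fa_word :: "gen list \<Rightarrow> 'l::field fa" where
  "fa_word w = Poly_Mapping.single w 1"

lemma single_Nil_one: "Poly_Mapping.single ([]::gen list) (1::'l::field) = 1"
proof -
  have "Poly_Mapping.single (0::gen list) (1::'l) = 1" by (rule single_one)
  then show ?thesis by (simp add: zero_list_def)
qed

lemma fa_coeffs_fa_const_times: "fa_coeffs (fa_const c * p) w = c * fa_coeffs p w"
proof -
  have "fa_coeffs (fa_const c * p) w = (\<Sum>k\<in>{0..length w}. if k = 0 then c * fa_coeffs p w else 0)"
    unfolding fa_coeffs_times_apply fa_mult_def
    by (rule sum.cong) (auto simp: fa_const_def lookup_single when_def)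
  then show ?thesis by simp
qed

lemma fa_coeffs_times_fa_const: "fa_coeffs (p * fa_const c) w = fa_coeffs p w * c"
proof -
  have "fa_coeffs (p * fa_const c) w = (\<Sum>k\<in>{0..length w}. if k = length w then fa_coeffs p w * c else 0)"
    unfolding fa_coeffs_times_apply fa_mult_def
    by (rule sum.cong) (auto simp: fa_const_def lookup_single when_def)
  then show ?thesis by simp
qed

lemma fa_const_central: "fa_const c * p = p * fa_const c"
  by (rule poly_mapping_eqI) (simp add: fa_coeffs_fa_const_times fa_coeffs_times_fa_const mult.commute)

lemma fa_const_add: "fa_const (c + d) = fa_const c + fa_const d"
  and fa_const_mult: "fa_const (c * d) = fa_const c * fa_const d"
  and fa_const_one: "fa_const 1 = 1"
  and fa_const_zero: "fa_const 0 = 0"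
  and fa_const_times_single: "fa_const c * Poly_Mapping.single w d = Poly_Mapping.single w (c * d)"
  by (simp_all add: fa_const_def single_add mult_single plus_list_def single_Nil_one)

lemma fa_word_Nil: "fa_word [] = 1"
  and fa_word_Cons: "fa_word (x # w) = fa_word [x] * fa_word w"
  by (simp_all add: fa_word_def single_Nil_one mult_single plus_list_def)

lemma fa_coeffs_fa_word: "fa_coeffs (fa_word w) = mono w"
  and fa_coeffs_add: "fa_coeffs (p + q) = fa_add (fa_coeffs p) (fa_coeffs q)"
  and fa_coeffs_diff: "fa_coeffs (p - q) = fa_diff (fa_coeffs p) (fa_coeffs q)"
  and fa_coeffs_smul: "fa_coeffs (fa_const c * p) = fa_smul c (fa_coeffs p)"
  and fa_coeffs_zero: "fa_coeffs 0 = fa_zero"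
  by (simp_all add: fun_eq_iff fa_word_def mono_def lookup_single when_def fa_add_def lookup_add
      fa_diff_def lookup_minus fa_smul_def fa_coeffs_fa_const_times fa_zero_def)

lemma fa_coeffs_one: "fa_coeffs 1 = mono []"
  using fa_coeffs_fa_word[of "[]"] by (simp add: fa_word_Nil)

lemma poly_mapping_sum_single: "p = (\<Sum>w\<in>Poly_Mapping.keys p. Poly_Mapping.single w (fa_coeffs p w))"
  by (rule poly_mapping_eqI) (auto simp: lookup_sum lookup_single when_def in_keys_iff
      sum.delta'[where S="Poly_Mapping.keys p"] cong: sum.cong)

section \<open>Substitution homomorphisms\<close>

definition subst_word :: "(gen \<Rightarrow> 'l::field fa) \<Rightarrow> gen list \<Rightarrow> 'l fa" where
  "subst_word \<chi> w = foldr (\<lambda>x acc. \<chi> x * acc) w 1"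

definition subst :: "(gen \<Rightarrow> 'l::field fa) \<Rightarrow> 'l fa \<Rightarrow> 'l fa" where
  "subst \<chi> p = (\<Sum>w\<in>Poly_Mapping.keys p. fa_const (fa_coeffs p w) * subst_word \<chi> w)"

lemma subst_word_Nil [simp]: "subst_word \<chi> [] = 1"
  and subst_word_Cons [simp]: "subst_word \<chi> (x # w) = \<chi> x * subst_word \<chi> w"
  by (simp_all add: subst_word_def)

lemma subst_word_append: "subst_word \<chi> (u @ v) = subst_word \<chi> u * subst_word \<chi> v"
  by (induction u) (simp_all add: mult.assoc)

lemma subst_zero: "subst \<chi> 0 = 0"
  by (simp add: subst_def)

lemma subst_add: "subst \<chi> (p + q) = subst \<chi> p + subst \<chi> q"
  unfolding subst_def
  by (rule setsum_keys_plus_distrib) (simp_all add: fa_const_zero fa_const_add distrib_right)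

lemma subst_single: "subst \<chi> (Poly_Mapping.single w c) = fa_const c * subst_word \<chi> w"
  by (cases "c = 0") (simp_all add: subst_def fa_const_zero)

lemma subst_sum: "subst \<chi> (\<Sum>x\<in>S. F x) = (\<Sum>x\<in>S. subst \<chi> (F x))"
  by (induction S rule: infinite_finite_induct) (simp_all add: subst_zero subst_add)

lemma subst_fa_word: "subst \<chi> (fa_word w) = subst_word \<chi> w"
  by (simp add: fa_word_def subst_single fa_const_one)

lemma subst_fa_const: "subst \<chi> (fa_const c) = fa_const c"
  by (simp add: fa_const_def subst_single)

lemma subst_one: "subst \<chi> 1 = 1"
  using subst_fa_word[of \<chi> "[]"] by (simp add: fa_word_Nil)

lemma subst_diff: "subst \<chi> (p - q) = subst \<chi> p - subst \<chi> q"
  by (metis add_diff_cancel diff_add_cancel subst_add)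

lemma subst_fa_const_times: "subst \<chi> (fa_const c * p) = fa_const c * subst \<chi> p"
proof -
  have "subst \<chi> (fa_const c * p)
      = subst \<chi> (\<Sum>w\<in>Poly_Mapping.keys p. Poly_Mapping.single w (c * fa_coeffs p w))"
    by (subst poly_mapping_sum_single[of p]) (simp add: sum_distrib_left fa_const_times_single)
  also have "\<dots> = (\<Sum>w\<in>Poly_Mapping.keys p. fa_const c * (fa_const (fa_coeffs p w) * subst_word \<chi> w))"
    by (simp add: subst_sum subst_single fa_const_mult mult.assoc)
  also have "\<dots> = fa_const c * subst \<chi> p"
    by (simp add: subst_def sum_distrib_left)
  finally show ?thesis .
qed

lemma subst_times: "subst \<chi> (p * q) = subst \<chi> p * subst \<chi> q"
proof -
  let ?K = "Poly_Mapping.keys p" and ?L = "Poly_Mapping.keys q"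
  have "p * q = (\<Sum>u\<in>?K. \<Sum>v\<in>?L. Poly_Mapping.single (u @ v) (fa_coeffs p u * fa_coeffs q v))"
    by (subst poly_mapping_sum_single[of p], subst poly_mapping_sum_single[of q])
      (simp add: sum_product mult_single plus_list_def)
  then have "subst \<chi> (p * q)
      = (\<Sum>u\<in>?K. \<Sum>v\<in>?L. fa_const (fa_coeffs p u * fa_coeffs q v) * subst_word \<chi> (u @ v))"
    by (simp add: subst_sum subst_single)
  also have "\<dots> = (\<Sum>u\<in>?K. \<Sum>v\<in>?L. (fa_const (fa_coeffs p u) * subst_word \<chi> u)
      * (fa_const (fa_coeffs q v) * subst_word \<chi> v))"
    by (intro sum.cong refl)
      (simp add: fa_const_mult subst_word_append mult.assoc, metis mult.assoc fa_const_central)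
  also have "\<dots> = subst \<chi> p * subst \<chi> q"
    by (simp add: subst_def sum_product)
  finally show ?thesis .
qed

lemma subst_subst_word: "subst \<psi> (subst_word \<chi> w) = subst_word (\<lambda>x. subst \<psi> (\<chi> x)) w"
  by (induction w) (simp_all add: subst_one subst_times)

lemma subst_subst: "subst \<psi> (subst \<chi> p) = subst (\<lambda>x. subst \<psi> (\<chi> x)) p"
  by (simp add: subst_def[of \<chi>] subst_sum subst_fa_const_times subst_subst_word
      subst_def[of "\<lambda>x. subst \<psi> (\<chi> x)"])

lemma fa_subst_fa_coeffs: "fa_subst (\<lambda>x. fa_coeffs (\<chi> x)) (fa_coeffs p) = fa_coeffs (subst \<chi> p)"
proof -
  have "word_img (\<lambda>x. fa_coeffs (\<chi> x)) w = fa_coeffs (subst_word \<chi> w)" for w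
    by (induction w) (simp_all add: word_img_def fa_coeffs_one fa_coeffs_times)
  moreover have "{w. fa_coeffs p w \<noteq> 0} = Poly_Mapping.keys p"
    by (auto simp: in_keys_iff)
  ultimately show ?thesis
    by (simp add: fun_eq_iff fa_subst_def subst_def lookup_sum fa_coeffs_fa_const_times)
qed

section \<open>Ideals of the free algebra and the presented algebras\<close>

definition fa_over :: "nat \<Rightarrow> 'l::field fa set" where
  "fa_over n = {p. \<forall>w\<in>Poly_Mapping.keys p. set w \<subseteq> letters n}"

lemma fa_over_zero: "0 \<in> fa_over n"
  by (simp add: fa_over_def)

lemma fa_over_add: "p \<in> fa_over n \<Longrightarrow> q \<in> fa_over n \<Longrightarrow> p + q \<in> fa_over n"
  unfolding fa_over_def using keys_add[of p q] by blast

lemma fa_over_diff: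
  assumes "p \<in> fa_over n" "q \<in> fa_over n"
  shows "p - q \<in> fa_over n"
proof -
  have "Poly_Mapping.keys (p - q) \<subseteq> Poly_Mapping.keys p \<union> Poly_Mapping.keys q"
    by (auto simp: in_keys_iff lookup_minus)
  with assms show ?thesis by (auto simp: fa_over_def)
qed

lemma fa_over_times: "p \<in> fa_over n \<Longrightarrow> q \<in> fa_over n \<Longrightarrow> p * q \<in> fa_over n"
  unfolding fa_over_def using keys_mult[of p q] by (fastforce simp: plus_list_def)

lemma fa_over_fa_const_times: "p \<in> fa_over n \<Longrightarrow> fa_const c * p \<in> fa_over n"
  unfolding fa_over_def by (auto simp: in_keys_iff fa_coeffs_fa_const_times)

lemma fa_over_fa_word: "set w \<subseteq> letters n \<Longrightarrow> fa_word w \<in> fa_over n"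
  unfolding fa_over_def fa_word_def by simp

lemma fa_over_one: "1 \<in> fa_over n"
  using fa_over_fa_word[of "[]" n] by (simp add: fa_word_Nil)

lemma fa_over_sum: "(\<And>x. x \<in> S \<Longrightarrow> F x \<in> fa_over n) \<Longrightarrow> (\<Sum>x\<in>S. F x) \<in> fa_over n"
  by (induction S rule: infinite_finite_induct) (simp_all add: fa_over_zero fa_over_add)

lemma fa_over_subst_word: "(\<And>x. x \<in> set w \<Longrightarrow> \<chi> x \<in> fa_over n) \<Longrightarrow> subst_word \<chi> w \<in> fa_over n"
  by (induction w) (simp_all add: fa_over_one fa_over_times)

lemma fa_over_subst:
  assumes "\<And>x. x \<in> letters n \<Longrightarrow> \<chi> x \<in> fa_over n" and "p \<in> fa_over n"
  shows "subst \<chi> p \<in> fa_over n"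
  unfolding subst_def
proof (rule fa_over_sum)
  fix w assume "w \<in> Poly_Mapping.keys p"
  with assms(2) have "set w \<subseteq> letters n" by (auto simp: fa_over_def)
  then show "fa_const (fa_coeffs p w) * subst_word \<chi> w \<in> fa_over n"
    using assms(1) by (intro fa_over_fa_const_times fa_over_subst_word) auto
qed

lemma fa_carrier_iff: "f \<in> fa_carrier n \<longleftrightarrow> (\<exists>p\<in>fa_over n. f = fa_coeffs p)"
proof
  assume f: "f \<in> fa_carrier n"
  then have "fa_coeffs (Abs_poly_mapping f) = f" by (simp add: fa_carrier_def)
  moreover from this f have "Abs_poly_mapping f \<in> fa_over n"
    by (auto simp: fa_over_def fa_carrier_def in_keys_iff)
  ultimately show "\<exists>p\<in>fa_over n. f = fa_coeffs p" by metis
qed (auto simp: fa_over_def fa_carrier_def in_keys_iff)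

lemma fa_coeffs_in_fa_carrier: "p \<in> fa_over n \<Longrightarrow> fa_coeffs p \<in> fa_carrier n"
  using fa_carrier_iff by blast

inductive_set ideal_gen :: "'a::ring_1 set \<Rightarrow> 'a set" for S where
  zero: "0 \<in> ideal_gen S"
| generator: "r \<in> S \<Longrightarrow> r \<in> ideal_gen S"
| add: "a \<in> ideal_gen S \<Longrightarrow> b \<in> ideal_gen S \<Longrightarrow> a + b \<in> ideal_gen S"
| mult: "a \<in> ideal_gen S \<Longrightarrow> x * a * y \<in> ideal_gen S"

lemma two_sided_ideal_ideal_gen: "two_sided_ideal (ideal_gen S)"
  by (auto simp: two_sided_ideal_def intro: ideal_gen.intros)

lemma subst_ideal_gen:
  assumes J: "two_sided_ideal J" and S: "\<And>r. r \<in> S \<Longrightarrow> subst \<chi> r \<in> J" and p: "p \<in> ideal_gen S"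
  shows "subst \<chi> p \<in> J"
  using p by induction
    (simp_all add: subst_zero subst_add subst_times S two_sided_ideal_zero[OF J]
      two_sided_ideal_add[OF J] two_sided_ideal_mult[OF J])

text \<open>\<open>fa_ideal\<close> only multiplies by elements over the letters; substituting each letter by
  itself or by \<open>0\<close> projects \<open>ideal_gen S\<close> onto it.\<close>
definition restrict_letters :: "nat \<Rightarrow> gen \<Rightarrow> 'l::field fa" where
  "restrict_letters n x = (if x \<in> letters n then fa_word [x] else 0)"

lemma subst_restrict_letters: "p \<in> fa_over n \<Longrightarrow> subst (restrict_letters n) p = p"
proof -
  have word: "set w \<subseteq> letters n \<Longrightarrow> subst_word (restrict_letters n) w = fa_word w" for w
  proof (induction w)
    case (Cons x w)
    then show ?case by (simp add: restrict_letters_def fa_word_Cons[of x w])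
  qed (simp add: fa_word_Nil)
  assume "p \<in> fa_over n"
  then have "subst (restrict_letters n) p = (\<Sum>w\<in>Poly_Mapping.keys p. Poly_Mapping.single w (fa_coeffs p w))"
    unfolding subst_def by (intro sum.cong refl) (auto simp: fa_over_def word fa_word_def fa_const_times_single)
  then show ?thesis by (simp flip: poly_mapping_sum_single)
qed

lemma fa_over_subst_restrict_letters: "subst (restrict_letters n) p \<in> fa_over n"
  unfolding subst_def
  by (intro fa_over_sum fa_over_fa_const_times fa_over_subst_word)
    (auto simp: restrict_letters_def fa_over_fa_word fa_over_zero)

lemma fa_ideal_imp_ideal_gen:
  assumes "f \<in> fa_ideal n (fa_coeffs ` S)" and "S \<subseteq> fa_over n"
  shows "\<exists>p\<in>ideal_gen S. f = fa_coeffs p"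
  using assms(1)
proof induction
  case zero
  show ?case by (metis fa_coeffs_zero ideal_gen.zero)
next
  case (gen r)
  then show ?case by (blast intro: ideal_gen.generator)
next
  case (add a b)
  then show ?case by (metis fa_coeffs_add ideal_gen.add)
next
  case (mult a x y)
  then obtain p x' y' where "p \<in> ideal_gen S" "a = fa_coeffs p" "x = fa_coeffs x'" "y = fa_coeffs y'"
    by (meson fa_carrier_iff)
  then show ?case by (metis fa_coeffs_times ideal_gen.mult mult.assoc)
qed

lemma fa_coeffs_subst_restrict_letters_in_fa_ideal:
  assumes "p \<in> ideal_gen S" and S: "S \<subseteq> fa_over n"
  shows "fa_coeffs (subst (restrict_letters n) p) \<in> fa_ideal n (fa_coeffs ` S)"
  using assms(1)
proof induction
  case zero
  then show ?case by (simp add: subst_zero fa_coeffs_zero fa_ideal.zero)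
next
  case (generator r)
  then show ?case using S by (simp add: subst_restrict_letters subset_eq fa_ideal.gen)
next
  case (add a b)
  then show ?case by (simp add: subst_add fa_coeffs_add fa_ideal.add)
next
  case (mult a x y)
  then show ?case
    by (simp add: subst_times fa_coeffs_times fa_ideal.mult fa_coeffs_in_fa_carrier
        fa_over_subst_restrict_letters mult.assoc)
qed

lemma fa_coeffs_in_fa_ideal:
  "p \<in> ideal_gen S \<Longrightarrow> S \<subseteq> fa_over n \<Longrightarrow> p \<in> fa_over n \<Longrightarrow> fa_coeffs p \<in> fa_ideal n (fa_coeffs ` S)"
  using fa_coeffs_subst_restrict_letters_in_fa_ideal[of p S n] subst_restrict_letters[of p n] by simp

lemma fa_ideal_iff_ideal_gen:
  "S \<subseteq> fa_over n \<Longrightarrow> p \<in> fa_over n \<Longrightarrow> fa_coeffs p \<in> fa_ideal n (fa_coeffs ` S) \<longleftrightarrow> p \<in> ideal_gen S"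
  using fa_ideal_imp_ideal_gen[of "fa_coeffs p" n S] fa_coeffs_in_fa_ideal[of p S n]
  by (metis poly_mapping.lookup_inject)

lemma subst_cong_ideal:
  assumes J: "two_sided_ideal J" and letter: "\<And>x. x \<in> letters n \<Longrightarrow> \<chi> x - fa_word [x] \<in> J"
    and p: "p \<in> fa_over n"
  shows "subst \<chi> p - p \<in> J"
proof -
  have word: "set w \<subseteq> letters n \<Longrightarrow> subst_word \<chi> w - fa_word w \<in> J" for w
  proof (induction w)
    case Nil
    then show ?case by (simp add: fa_word_Nil two_sided_ideal_zero[OF J])
  next
    case (Cons x w)
    have "subst_word \<chi> (x # w) - fa_word (x # w)
        = (\<chi> x - fa_word [x]) * subst_word \<chi> w + fa_word [x] * (subst_word \<chi> w - fa_word w)"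
      by (simp add: fa_word_Cons[of x w] algebra_simps)
    with Cons letter show ?case
      by (simp add: two_sided_ideal_add[OF J] two_sided_ideal_mult_right[OF J] two_sided_ideal_mult_left[OF J])
  qed
  have "subst \<chi> p - p = (\<Sum>w\<in>Poly_Mapping.keys p. fa_const (fa_coeffs p w) * (subst_word \<chi> w - fa_word w))"
    by (subst (2) poly_mapping_sum_single)
      (simp add: subst_def right_diff_distrib sum_subtractf fa_word_def fa_const_times_single)
  also have "\<dots> \<in> J"
    using p word by (intro two_sided_ideal_sum[OF J] two_sided_ideal_mult_left[OF J]) (auto simp: fa_over_def)
  finally show ?thesis .
qed

lemma fa_subst_algebra_hom:
  assumes "\<And>x. x \<in> letters n \<Longrightarrow> \<chi> x \<in> fa_over n"
  defines "\<phi> \<equiv> \<lambda>x. fa_coeffs (\<chi> x)"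
  shows "\<forall>f\<in>fa_carrier n. fa_subst \<phi> f \<in> fa_carrier n"
    and "fa_subst \<phi> (mono []) = mono []"
    and "\<forall>f\<in>fa_carrier n. \<forall>g\<in>fa_carrier n. fa_subst \<phi> (fa_add f g) = fa_add (fa_subst \<phi> f) (fa_subst \<phi> g)"
    and "\<forall>c. \<forall>f\<in>fa_carrier n. fa_subst \<phi> (fa_smul c f) = fa_smul c (fa_subst \<phi> f)"
    and "\<forall>f\<in>fa_carrier n. \<forall>g\<in>fa_carrier n. fa_subst \<phi> (fa_mult f g) = fa_mult (fa_subst \<phi> f) (fa_subst \<phi> g)"
  using assms
  by (auto simp: fa_carrier_iff \<phi>_def fa_subst_fa_coeffs fa_over_subst subst_one subst_add subst_times
      subst_fa_const simp flip: fa_coeffs_one fa_coeffs_add fa_coeffs_smul fa_coeffs_times)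

lemma induces_iso_if_inverse_substs:
  fixes \<chi> \<psi> :: "gen \<Rightarrow> 'l::field fa"
  assumes S1: "S1 \<subseteq> fa_over n" and S2: "S2 \<subseteq> fa_over n"
    and \<chi>_over: "\<And>x. x \<in> letters n \<Longrightarrow> \<chi> x \<in> fa_over n"
    and \<psi>_over: "\<And>x. x \<in> letters n \<Longrightarrow> \<psi> x \<in> fa_over n"
    and \<chi>_rels: "\<And>r. r \<in> S1 \<Longrightarrow> subst \<chi> r \<in> ideal_gen S2"
    and \<psi>_rels: "\<And>r. r \<in> S2 \<Longrightarrow> subst \<psi> r \<in> ideal_gen S1"
    and \<psi>\<chi>: "\<And>x. x \<in> letters n \<Longrightarrow> subst \<psi> (\<chi> x) - fa_word [x] \<in> ideal_gen S1"
    and \<chi>\<psi>: "\<And>x. x \<in> letters n \<Longrightarrow> subst \<chi> (\<psi> x) - fa_word [x] \<in> ideal_gen S2"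
  shows "induces_iso n (fa_ideal n (fa_coeffs ` S1)) (fa_ideal n (fa_coeffs ` S2)) (\<lambda>x. fa_coeffs (\<chi> x))"
proof -
  note ideal = two_sided_ideal_ideal_gen
  have \<chi>_ideal: "p \<in> ideal_gen S1 \<Longrightarrow> subst \<chi> p \<in> ideal_gen S2" for p
    by (rule subst_ideal_gen[OF ideal \<chi>_rels])
  have \<psi>_ideal: "p \<in> ideal_gen S2 \<Longrightarrow> subst \<psi> p \<in> ideal_gen S1" for p
    by (rule subst_ideal_gen[OF ideal \<psi>_rels])
  have \<psi>\<chi>_id: "subst \<psi> (subst \<chi> p) - p \<in> ideal_gen S1" if "p \<in> fa_over n" for p
    unfolding subst_subst using subst_cong_ideal[OF ideal _ that] \<psi>\<chi> by (simp add: subst_fa_word)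
  have \<chi>\<psi>_id: "subst \<chi> (subst \<psi> p) - p \<in> ideal_gen S2" if "p \<in> fa_over n" for p
    unfolding subst_subst using subst_cong_ideal[OF ideal _ that] \<chi>\<psi> by (simp add: subst_fa_word)
  have reflect: "p \<in> ideal_gen S1" if "p \<in> fa_over n" "subst \<chi> p \<in> ideal_gen S2" for p
    using two_sided_ideal_diff[OF ideal \<psi>_ideal[OF that(2)] \<psi>\<chi>_id[OF that(1)]] by simp
  show ?thesis
    unfolding induces_iso_def
  proof (intro conjI fa_subst_algebra_hom[OF \<chi>_over] ballI impI)
    fix f :: "gen list \<Rightarrow> 'l" assume "f \<in> fa_carrier n" and "f \<in> fa_ideal n (fa_coeffs ` S1)"
    then obtain p where "p \<in> fa_over n" "p \<in> ideal_gen S1" "f = fa_coeffs p"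
      by (auto simp: fa_carrier_iff fa_ideal_iff_ideal_gen S1)
    then show "fa_subst (\<lambda>x. fa_coeffs (\<chi> x)) f \<in> fa_ideal n (fa_coeffs ` S2)"
      by (simp add: fa_subst_fa_coeffs fa_ideal_iff_ideal_gen S2 fa_over_subst \<chi>_over \<chi>_ideal)
  next
    fix f :: "gen list \<Rightarrow> 'l" assume "f \<in> fa_carrier n" and "fa_subst (\<lambda>x. fa_coeffs (\<chi> x)) f \<in> fa_ideal n (fa_coeffs ` S2)"
    then obtain p where "p \<in> fa_over n" "subst \<chi> p \<in> ideal_gen S2" "f = fa_coeffs p"
      by (auto simp: fa_carrier_iff fa_subst_fa_coeffs fa_ideal_iff_ideal_gen S2 fa_over_subst \<chi>_over)
    then show "f \<in> fa_ideal n (fa_coeffs ` S1)"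
      by (simp add: fa_ideal_iff_ideal_gen S1 reflect)
  next
    fix g :: "gen list \<Rightarrow> 'l" assume "g \<in> fa_carrier n"
    then obtain p where p: "p \<in> fa_over n" "g = fa_coeffs p" by (auto simp: fa_carrier_iff)
    then have "fa_diff (fa_subst (\<lambda>x. fa_coeffs (\<chi> x)) (fa_coeffs (subst \<psi> p))) g
        \<in> fa_ideal n (fa_coeffs ` S2)"
      using \<chi>\<psi>_id[OF p(1)]
      by (simp add: fa_subst_fa_coeffs S2 fa_ideal_iff_ideal_gen fa_over_diff fa_over_subst \<chi>_over \<psi>_over
          flip: fa_coeffs_diff)
    moreover have "fa_coeffs (subst \<psi> p) \<in> fa_carrier n"
      by (simp add: fa_coeffs_in_fa_carrier fa_over_subst \<psi>_over p(1))
    ultimately show "\<exists>f\<in>fa_carrier n. fa_diff (fa_subst (\<lambda>x. fa_coeffs (\<chi> x)) f) g \<in> fa_ideal n (fa_coeffs ` S2)"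
      by blast
  qed
qed

section \<open>The twist isomorphism\<close>

definition bt_rels_fa :: "nat \<Rightarrow> 'l::field \<Rightarrow> 'l \<Rightarrow> 'l fa set" where
  "bt_rels_fa n a b =
     {fa_word [E i, E j] - fa_word [E j, E i] | i j. 1 \<le> i \<and> i < n \<and> 1 \<le> j \<and> j < n}
   \<union> {fa_word [E i, E i] - fa_word [E i] | i. 1 \<le> i \<and> i < n}
   \<union> {fa_word [E i, G j] - fa_word [G j, E i] | i j. 1 \<le> i \<and> i < n \<and> 1 \<le> j \<and> j < n
          \<and> (i + 1 < j \<or> j + 1 < i)}
   \<union> {fa_word [E i, G i] - fa_word [G i, E i] | i. 1 \<le> i \<and> i < n}
   \<union> {fa_word [E i, G j, G i] - fa_word [G j, G i, E j] | i j. 1 \<le> i \<and> i < n \<and> 1 \<le> j \<and> j < n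
          \<and> (j = i + 1 \<or> i = j + 1)}
   \<union> {fa_word [E i, E j, G i] - fa_word [E j, G i, E j] | i j. 1 \<le> i \<and> i < n \<and> 1 \<le> j \<and> j < n
          \<and> (j = i + 1 \<or> i = j + 1)}
   \<union> {fa_word [E j, G i, E j] - fa_word [G i, E i, E j] | i j. 1 \<le> i \<and> i < n \<and> 1 \<le> j \<and> j < n
          \<and> (j = i + 1 \<or> i = j + 1)}
   \<union> {fa_word [G i, G j] - fa_word [G j, G i] | i j. 1 \<le> i \<and> i < n \<and> 1 \<le> j \<and> j < n
          \<and> (i + 1 < j \<or> j + 1 < i)}
   \<union> {fa_word [G i, G j, G i] - fa_word [G j, G i, G j] | i j. 1 \<le> i \<and> i < n \<and> 1 \<le> j \<and> j < n
          \<and> (j = i + 1 \<or> i = j + 1)}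
   \<union> {fa_word [G i, G i] - (fa_word [] + (fa_const (a - 1) * fa_word [E i] + fa_const (b - 1) * fa_word [E i, G i]))
       | i. 1 \<le> i \<and> i < n}"

lemma fa_coeffs_bt_rels_fa: "fa_coeffs ` bt_rels_fa n a b = bt_rels n a b"
proof -
  have image2: "f ` {F i j | i j. P i j} = {f (F i j) | i j. P i j}" for f F P by blast
  have image1: "f ` {F i | i. P i} = {f (F i) | i. P i}" for f F P by blast
  show ?thesis
    unfolding bt_rels_fa_def bt_rels_def image_Un image2 image1
      fa_coeffs_diff fa_coeffs_fa_word fa_coeffs_add fa_coeffs_smul ..
qed

lemma bt_rels_fa_over: "bt_rels_fa n a b \<subseteq> fa_over n"
  unfolding bt_rels_fa_def
  by (auto intro!: fa_over_diff fa_over_add fa_over_fa_const_times fa_over_fa_word simp: letters_def)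

lemma fa_word_Cons_Cons: "fa_word (x # y # w) = fa_word [x] * fa_word (y # w)"
  by (rule fa_word_Cons)

lemma bt_relations_letters:
  "bt_relations (ideal_gen (bt_rels_fa n a b)) fa_const (\<lambda>i. fa_word [E i]) (\<lambda>i. fa_word [G i]) n (a - 1) (b - 1)"
  unfolding bt_relations_def cong_mod_def adjacent_def distant_def
  by (intro conjI ballI impI; rule ideal_gen.generator; unfold bt_rels_fa_def;
      simp only: fa_word_Cons_Cons fa_word_Nil atLeastLessThan_iff; blast)

lemma subst_bt_rels_fa:
  assumes "bt_relations J fa_const e g n (a - 1) (b - 1)"
    and "\<And>i. 1 \<le> i \<Longrightarrow> i < n \<Longrightarrow> \<chi> (E i) = e i"
    and "\<And>i. 1 \<le> i \<Longrightarrow> i < n \<Longrightarrow> \<chi> (G i) = g i"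
    and "r \<in> bt_rels_fa n a b"
  shows "subst \<chi> r \<in> J"
  using assms unfolding bt_relations_def cong_mod_def adjacent_def distant_def Ball_def atLeastLessThan_iff
    bt_rels_fa_def
  by (elim UnE CollectE exE conjE; simp only: subst_diff subst_add subst_fa_const_times subst_fa_word
      subst_word_Cons subst_word_Nil mult_1_right assms(2,3); blast)

definition bt_subst :: "'l::field \<Rightarrow> gen \<Rightarrow> 'l fa" where
  "bt_subst \<delta> x = (case x of G i \<Rightarrow> fa_word [G i] + fa_const \<delta> * fa_word [E i, G i] | E i \<Rightarrow> fa_word [E i])"

lemma fa_coeffs_bt_subst: "(\<lambda>x. fa_coeffs (bt_subst \<delta> x)) = bt_assign \<delta>"
  by (rule ext, case_tac x) (simp_all add: bt_assign_def bt_subst_def fa_coeffs_add fa_coeffs_smul fa_coeffs_fa_word)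

lemma bt_subst_over: "x \<in> letters n \<Longrightarrow> bt_subst \<delta> x \<in> fa_over n"
  by (auto simp: letters_def bt_subst_def intro!: fa_over_add fa_over_fa_const_times fa_over_fa_word)

lemma bt_subst_G: "bt_subst \<delta> (G i) = (1 + fa_const \<delta> * fa_word [E i]) * fa_word [G i]"
  by (simp add: bt_subst_def fa_word_Cons_Cons algebra_simps)

lemma subst_bt_subst_bt_rels_fa:
  assumes a: "a \<noteq> 0" and a': "a' = (1 + \<delta>) ^ 2 * a" and b': "b' = (b - 1) * (1 + \<delta>) + 1"
    and r: "r \<in> bt_rels_fa n a' b'"
  shows "subst (bt_subst \<delta>) r \<in> ideal_gen (bt_rels_fa n a b)"
proof -
  let ?T = "\<lambda>i. (1 + fa_const \<delta> * fa_word [E i]) * fa_word [G i]"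
  have "bt_relations (ideal_gen (bt_rels_fa n a b)) fa_const (\<lambda>i. fa_word [E i]) ?T n
      ((1 + \<delta>) * (1 + \<delta>) * (1 + (a - 1)) - 1) ((b - 1) * (1 + \<delta>))"
    using a by (intro bt_relations_twist two_sided_ideal_ideal_gen bt_relations_letters fa_const_central)
      (simp_all add: fa_const_add fa_const_mult fa_const_one)
  moreover have "(1 + \<delta>) * (1 + \<delta>) * (1 + (a - 1)) - 1 = a' - 1" "(b - 1) * (1 + \<delta>) = b' - 1"
    by (simp_all add: a' b' power2_eq_square)
  ultimately have "bt_relations (ideal_gen (bt_rels_fa n a b)) fa_const (\<lambda>i. fa_word [E i]) ?T n (a' - 1) (b' - 1)"
    by (simp only:)
  then show ?thesis
    by (rule subst_bt_rels_fa[OF _ _ _ r]) (simp add: bt_subst_def, simp add: bt_subst_G)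
qed

lemma bt_subst_E: "bt_subst \<delta> (E i) = fa_word [E i]"
  by (simp add: bt_subst_def)

lemma twist_twist_inverse:
  fixes \<delta> \<delta>' :: "'l::field" and e g :: "'l fa"
  assumes "(1 + \<delta>) * (1 + \<delta>') = 1"
  shows "(1 + fa_const \<delta> * e) * ((1 + fa_const \<delta>' * e) * g) - g = fa_const (\<delta> * \<delta>') * ((e * e - e) * g)"
proof -
  have sum: "\<delta> + \<delta>' = - (\<delta> * \<delta>')" using assms by (simp add: algebra_simps eq_neg_iff_add_eq_0)
  have "(1 + fa_const \<delta> * e) * ((1 + fa_const \<delta>' * e) * g) - g
      = fa_const \<delta> * (e * (fa_const \<delta>' * (e * g))) + (fa_const \<delta> + fa_const \<delta>') * (e * g)"
    by (simp add: algebra_simps)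
  also have "e * (fa_const \<delta>' * (e * g)) = fa_const \<delta>' * (e * (e * g))"
    by (metis fa_const_central mult.assoc)
  also have "fa_const \<delta> + fa_const \<delta>' = - fa_const (\<delta> * \<delta>')"
    by (metis sum fa_const_add add.inverse_unique add_eq_0_iff fa_const_zero)
  finally show ?thesis by (simp add: fa_const_mult algebra_simps)
qed

lemma subst_bt_subst_inverse:
  assumes \<delta>: "(1 + \<delta>) * (1 + \<delta>') = 1" and x: "x \<in> letters n"
  shows "subst (bt_subst \<delta>') (bt_subst \<delta> x) - fa_word [x] \<in> ideal_gen (bt_rels_fa n a b)"
proof (cases x)
  case (G i)
  let ?e = "fa_word [E i]" and ?g = "fa_word [G i]"
  from x G have "1 \<le> i \<and> i < n" by (auto simp: letters_def)
  then have "fa_word [E i, E i] - ?e \<in> bt_rels_fa n a b" unfolding bt_rels_fa_def by blast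
  then have idem: "?e * ?e - ?e \<in> ideal_gen (bt_rels_fa n a b)"
    by (simp add: ideal_gen.generator flip: fa_word_Cons_Cons)
  have "subst (bt_subst \<delta>') (bt_subst \<delta> x) - fa_word [x] = fa_const (\<delta> * \<delta>') * ((?e * ?e - ?e) * ?g)"
    by (simp add: G bt_subst_G bt_subst_E subst_times subst_add subst_one subst_fa_const subst_fa_word
        twist_twist_inverse[OF \<delta>])
  also have "\<dots> \<in> ideal_gen (bt_rels_fa n a b)"
    by (intro two_sided_ideal_mult_left[OF two_sided_ideal_ideal_gen]
        two_sided_ideal_mult_right[OF two_sided_ideal_ideal_gen] idem)
  finally show ?thesis .
qed (simp add: bt_subst_E subst_fa_word ideal_gen.zero)

theorem bt_assign_induces_iso:
  fixes a b \<delta> :: "'l::field"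
  assumes a: "a \<noteq> 0" and \<delta>: "1 + \<delta> \<noteq> 0"
  shows "induces_iso n (fa_ideal n (bt_rels n ((1 + \<delta>) ^ 2 * a) ((b - 1) * (1 + \<delta>) + 1)))
           (fa_ideal n (bt_rels n a b)) (bt_assign \<delta>)"
proof -
  define a' b' where "a' = (1 + \<delta>) ^ 2 * a" and "b' = (b - 1) * (1 + \<delta>) + 1"
  define \<delta>' where "\<delta>' = - \<delta> / (1 + \<delta>)"
  have inverse: "(1 + \<delta>) * (1 + \<delta>') = 1" "(1 + \<delta>') * (1 + \<delta>) = 1"
    using \<delta> by (simp_all add: \<delta>'_def field_simps)
  have "(1 + \<delta>') ^ 2 * a' = ((1 + \<delta>') * (1 + \<delta>)) ^ 2 * a"
    by (simp add: a'_def power_mult_distrib mult.assoc)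
  moreover have "(b' - 1) * (1 + \<delta>') + 1 = (b - 1) * ((1 + \<delta>) * (1 + \<delta>')) + 1"
    by (simp add: b'_def mult.assoc)
  ultimately have inverse_params: "a = (1 + \<delta>') ^ 2 * a'" "b = (b' - 1) * (1 + \<delta>') + 1"
    by (simp_all add: inverse)
  show ?thesis
    unfolding a'_def[symmetric] b'_def[symmetric] fa_coeffs_bt_rels_fa[symmetric] fa_coeffs_bt_subst[symmetric]
  proof (rule induces_iso_if_inverse_substs[OF bt_rels_fa_over bt_rels_fa_over bt_subst_over bt_subst_over])
    show "subst (bt_subst \<delta>) r \<in> ideal_gen (bt_rels_fa n a b)" if "r \<in> bt_rels_fa n a' b'" for r
      by (rule subst_bt_subst_bt_rels_fa[OF a a'_def b'_def that])
    show "subst (bt_subst \<delta>') r \<in> ideal_gen (bt_rels_fa n a' b')" if "r \<in> bt_rels_fa n a b" for r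
      using a \<delta> by (intro subst_bt_subst_bt_rels_fa[OF _ inverse_params that]) (simp add: a'_def)
    show "subst (bt_subst \<delta>') (bt_subst \<delta> x) - fa_word [x] \<in> ideal_gen (bt_rels_fa n a' b')"
      if "x \<in> letters n" for x
      by (rule subst_bt_subst_inverse[OF inverse(1) that])
    show "subst (bt_subst \<delta>) (bt_subst \<delta>' x) - fa_word [x] \<in> ideal_gen (bt_rels_fa n a b)"
      if "x \<in> letters n" for x
      by (rule subst_bt_subst_inverse[OF inverse(2) that])
  qed
qed

theorem proposition1:
  fixes emb :: "K \<Rightarrow> 'l::field" and \<delta> :: 'l and n :: nat
  assumes emb_add: "\<And>a b. emb (a + b) = emb a + emb b"
      and emb_mult: "\<And>a b. emb (a * b) = emb a * emb b"
      and emb_one: "emb 1 = 1"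
      and emb_inj: "inj emb"
      and root: "emb uu * (\<delta> + 1)^2 - (emb vv - 1) * (\<delta> + 1) - 1 = 0"
      and gen_by_delta: "\<forall>x::'l. \<exists>a b. x = emb a + emb b * \<delta>"
      and n: "1 \<le> n"
  shows "induces_iso n
           (fa_ideal n (bt_rels n (emb uu * (\<delta> + 1)^2) (emb uu * (\<delta> + 1)^2)))
           (fa_ideal n (bt_rels n (emb uu) (emb vv)))
           (bt_assign \<delta>)"
proof -
  \<comment> \<open>Only additivity and injectivity of \<open>emb\<close> matter: any \<open>\<delta>\<close> with \<open>(1 + \<delta>)\<^sup>2 u = (v - 1)(1 + \<delta>) + 1\<close>
    in any extension field works, whether or not it generates it.\<close>
  have "uu \<noteq> 0"
    by (simp add: uu_def Zero_fract_def eq_fract)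
  moreover have "emb 0 = 0"
    using emb_add[of 0 0] by (metis add.right_neutral add_left_cancel)
  ultimately have u: "emb uu \<noteq> 0"
    using emb_inj by (metis injD)
  have \<delta>: "1 + \<delta> \<noteq> 0"
    using root by (auto simp: add.commute)
  have "(1 + \<delta>) ^ 2 * emb uu = emb uu * (\<delta> + 1) ^ 2"
    and "(emb vv - 1) * (1 + \<delta>) + 1 = emb uu * (\<delta> + 1) ^ 2"
    using root by (simp_all add: algebra_simps)
  with bt_assign_induces_iso[OF u \<delta>, of n "emb vv"] show ?thesis
    by simp
qed

end
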